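(* If there is a $P$-counting module with data order $K\le 1$, then there is a (non-deterministic, i.e. possibly using $\mathsf{choose}$) $(\lambda n.\,2^{P(n)-1})$-counting module with data order $1$.
   Context: Types are built from a finite set $\mathcal{S}$ of sorts (containing $\mathsf{bool}$ and $\mathsf{list}$) by $\sigma ::= \iota \mid \sigma \times \tau \mid \sigma \Rightarrow \tau$. Type order: $\mathrm{ord}(\iota)=0$ for sorts, $\mathrm{ord}(\sigma\times\tau)=\max(\mathrm{ord}(\sigma),\mathrm{ord}(\tau))$, $\mathrm{ord}(\sigma\Rightarrow\tau)=\max(\mathrm{ord}(\sigma)+1,\mathrm{ord}(\tau))$. Constructors include $\mathsf{true},\mathsf{false}:\mathsf{bool}$, $[]:\mathsf{list}$ and infix $::\ :\mathsf{bool}\Rightarrow\mathsf{list}\Rightarrow\mathsf{list}$; constructors take arguments of order-$0$ types and return a sort. Syntax. Patterns: $\ell ::= x \mid c\,\ell_1\cdots\ell_m$ ($c$ a constructor). Expressions: $s ::= x \mid c \mid f \mid \mathsf{if}\ s_1\ \mathsf{then}\ s_2\ \mathsf{else}\ s_3 \mid \mathsf{choose}\ s_1\cdots s_n \mid (s,t) \mid s\,t$ ($f$ a defined symbol). Clauses have the form $f\,\ell_1\cdots\ell_k = s$; each lhs variable occurs once, rhs variables occur in the lhs, both sides are simply typed with a common type under some type environment $\Gamma$ for the lhs variables, constructors are fully applied, and all clauses for $f$ have the same number $\mathrm{arity}(f)$ of arguments. Sub-expressions: $s \unrhd t$ iff $s = t$ or $s \rhd t$, where $(s_1,s_2)\rhd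 t$, $\mathsf{if}\ s_1\ \mathsf{then}\ s_2\ \mathsf{else}\ s_3 \rhd t$ and $\mathsf{choose}\ s_1\cdots s_n\rhd t$ hold if $s_i \unrhd t$ for some $i$, and $s_1\,s_2 \rhd t$ holds if $s_1 \rhd t$ or $s_2 \unrhd t$. A clause $f\,\ell_1\cdots\ell_k=s$ is cons-free if every $t$ with $s\unrhd t$ of the form $c\,s_1\cdots s_m$ with $c$ a constructor is a data expression or satisfies $\ell_i\unrhd t$ for some $i$. A list of clauses has data order $K$ if all clauses can be typed with environments assigning every variable a type of order $\le K$. Semantics. Data expressions $d ::= c\,d_1\cdots d_m \mid (d,d')$; values $v ::= d \mid (v,w) \mid f\,v_1\cdots v_n$ with $n<\mathrm{arity}(f)$. For a list of clauses $p$, judgements $p,\gamma\vdash s\to w$ and $p\vdash^{\mathrm{call}} f\,v_1\cdots v_n\to w$ are derived by: $p,\gamma\vdash x\to\gamma(x)$; $p,\gamma\vdash f\to w$ if $p\vdash^{\mathrm{call}} f\to w$; $p,\gamma\vdash c\,s_1\cdots s_m\to c\,b_1\cdots b_m$ if $p,\gamma\vdash s_i\to b_i$; $p,\gamma\vdash(s,t)\to(v,w)$ if $s\to v$, $t\to w$; $p,\gamma\vdash\mathsf{choose}\ s_1\cdots s_n\to w$ if $p,\gamma\vdash s_i\to w$ for some $i$; $p,\gamma\vdash\mathsf{if}\ s_1\ \mathsf{then}\ s_2\ \mathsf{else}\ s_3\to w$ if $s_1\to\mathsf{true}$ and $s_2\to w$, or $s_1\to\mathsf{false}$ and $s_3\to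 w$; $p,\gamma\vdash s\,t\to w$ if $s\to f\,v_1\cdots v_n$, $t\to v_{n+1}$ and $p\vdash^{\mathrm{call}} f\,v_1\cdots v_{n+1}\to w$; $p\vdash^{\mathrm{call}} f\,v_1\cdots v_n\to f\,v_1\cdots v_n$ if $n<\mathrm{arity}(f)$; $p\vdash^{\mathrm{call}} f\,v_1\cdots v_k\to w$ if $p,\gamma\vdash s\to w$ where $f\,\ell_1\cdots\ell_k=s$ is the first clause of $p$ with $v_i=\ell_i\gamma$ for all $i$ for some $\gamma$ on the lhs variables. Counting modules. For $P:\mathbb{N}\to\mathbb{N}\setminus\{0\}$, a $P$-counting module is a tuple $(\alpha_\pi,\mathcal{D}_\pi,\mathcal{A}_\pi,[\![\cdot]\!]_\pi,p_\pi)$ where: $\alpha_\pi$ is a type; $\mathcal{D}_\pi$ is a set of fresh defined symbols containing $\mathsf{seed}_\pi:\mathsf{list}\Rightarrow\alpha_\pi$, $\mathsf{pred}_\pi:\mathsf{list}\Rightarrow\alpha_\pi\Rightarrow\alpha_\pi$, $\mathsf{zero}_\pi:\mathsf{list}\Rightarrow\alpha_\pi\Rightarrow\mathsf{bool}$; for each $n\in\mathbb{N}$, $\mathcal{A}^n_\pi$ is a set of values of type $\alpha_\pi$ built over the constructors and $\mathcal{D}_\pi$ and $[\![\cdot]\!]^n_\pi:\mathcal{A}^n_\pi\to\mathbb{N}$ is total; and $p_\pi$ is a list of cons-free clauses on the symbols of $\mathcal{D}_\pi$ such that for every boolean list $cs$ of length $n$: there is a unique value $v$ with $p_\pi\vdash^{\mathrm{call}}\mathsf{seed}_\pi\,cs\to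 v$, and it satisfies $v\in\mathcal{A}^n_\pi$, $[\![v]\!]^n_\pi=P(n)-1$; if $v\in\mathcal{A}^n_\pi$ with $[\![v]\!]^n_\pi=i>0$, there is a unique $w$ with $p_\pi\vdash^{\mathrm{call}}\mathsf{pred}_\pi\,cs\,v\to w$, and $w\in\mathcal{A}^n_\pi$, $[\![w]\!]^n_\pi=i-1$; and for $v\in\mathcal{A}^n_\pi$ with $[\![v]\!]^n_\pi=i$, $p_\pi\vdash^{\mathrm{call}}\mathsf{zero}_\pi\,cs\,v\to\mathsf{true}$ iff $i=0$, and $p_\pi\vdash^{\mathrm{call}}\mathsf{zero}_\pi\,cs\,v\to\mathsf{false}$ iff $i>0$. The module has data order $K$ if $p_\pi$ has data order $K$. *)

theory Defs
  imports Main
begin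

datatype sort = SBool | SList | SOther string

datatype ty = TBase sort | TProd ty ty | TArr ty ty

fun ord :: "ty \<Rightarrow> nat" where
  "ord (TBase s) = 0"
| "ord (TProd a b) = max (ord a) (ord b)"
| "ord (TArr a b) = max (ord a + 1) (ord b)"

fun sorts_of :: "ty \<Rightarrow> sort set" where
  "sorts_of (TBase s) = {s}"
| "sorts_of (TProd a b) = sorts_of a \<union> sorts_of b"
| "sorts_of (TArr a b) = sorts_of a \<union> sorts_of b"

definition ty_over :: "sort set \<Rightarrow> ty \<Rightarrow> bool" where
  "ty_over S t \<longleftrightarrow> sorts_of t \<subseteq> S"

datatype cname = CTrue | CFalse | CNil | CCons | COther string

type_synonym csig = "string \<Rightarrow> (ty list \<times> sort) option"

fun csig_of :: "csig \<Rightarrow> cname \<Rightarrow> (ty list \<times> sort) option" where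
  "csig_of \<Sigma> CTrue = Some ([], SBool)"
| "csig_of \<Sigma> CFalse = Some ([], SBool)"
| "csig_of \<Sigma> CNil = Some ([], SList)"
| "csig_of \<Sigma> CCons = Some ([TBase SBool, TBase SList], SList)"
| "csig_of \<Sigma> (COther c) = \<Sigma> c"

definition wf_sig :: "sort set \<Rightarrow> csig \<Rightarrow> bool" where
  "wf_sig S \<Sigma> \<longleftrightarrow> finite S \<and> SBool \<in> S \<and> SList \<in> S \<and> finite (dom \<Sigma>) \<and>
     (\<forall>c tys s. \<Sigma> c = Some (tys, s) \<longrightarrow> s \<in> S \<and> (\<forall>t\<in>set tys. ty_over S t \<and> ord t = 0))"

datatype pat = PVar string | PCon cname "pat list"

text \<open>Since constructors are always fully applied, a constructor application
  \<open>c s1 ... sm\<close> is represented by a single node \<open>ConApp c [s1,...,sm]\<close>.\<close>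
datatype expr = Var string | ConApp cname "expr list" | Fun string
  | If expr expr expr | Choose "expr list" | Pair expr expr | App expr expr

type_synonym clause = "string \<times> pat list \<times> expr"

fun pat_expr :: "pat \<Rightarrow> expr" where
  "pat_expr (PVar x) = Var x"
| "pat_expr (PCon c ls) = ConApp c (map pat_expr ls)"

fun pvars :: "pat \<Rightarrow> string list" where
  "pvars (PVar x) = [x]"
| "pvars (PCon c ls) = concat (map pvars ls)"

fun fvars :: "expr \<Rightarrow> string set" where
  "fvars (Var x) = {x}"
| "fvars (ConApp c ss) = \<Union>(fvars ` set ss)"
| "fvars (Fun f) = {}"
| "fvars (If a b c) = fvars a \<union> fvars b \<union> fvars c"
| "fvars (Choose ss) = \<Union>(fvars ` set ss)"
| "fvars (Pair a b) = fvars a \<union> fvars b"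
| "fvars (App a b) = fvars a \<union> fvars b"

fun funs :: "expr \<Rightarrow> string set" where
  "funs (Var x) = {}"
| "funs (ConApp c ss) = \<Union>(funs ` set ss)"
| "funs (Fun f) = {f}"
| "funs (If a b c) = funs a \<union> funs b \<union> funs c"
| "funs (Choose ss) = \<Union>(funs ` set ss)"
| "funs (Pair a b) = funs a \<union> funs b"
| "funs (App a b) = funs a \<union> funs b"

text \<open>Strict sub-expressions (the relation \<open>\<rhd>\<close>); note that for an application
  \<open>s1 s2\<close> only strict sub-expressions of \<open>s1\<close> are included.\<close>
fun ssubs :: "expr \<Rightarrow> expr set" where
  "ssubs (Var x) = {}"
| "ssubs (Fun f) = {}"
| "ssubs (ConApp c ss) = (\<Union>s\<in>set ss. insert s (ssubs s))"
| "ssubs (If a b c) = insert a (ssubs a) \<union> insert b (ssubs b) \<union> insert c (ssubs c)"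
| "ssubs (Choose ss) = (\<Union>s\<in>set ss. insert s (ssubs s))"
| "ssubs (Pair a b) = insert a (ssubs a) \<union> insert b (ssubs b)"
| "ssubs (App a b) = ssubs a \<union> insert b (ssubs b)"

definition subexpr :: "expr \<Rightarrow> expr \<Rightarrow> bool" where
  "subexpr s t \<longleftrightarrow> t \<in> insert s (ssubs s)"

fun is_data_expr :: "expr \<Rightarrow> bool" where
  "is_data_expr (ConApp c ss) = (\<forall>s\<in>set ss. is_data_expr s)"
| "is_data_expr (Pair a b) = (is_data_expr a \<and> is_data_expr b)"
| "is_data_expr _ = False"

fun is_conapp :: "expr \<Rightarrow> bool" where
  "is_conapp (ConApp c ss) = True"
| "is_conapp _ = False"

definition cons_free :: "clause \<Rightarrow> bool" where
  "cons_free cl \<longleftrightarrow> (case cl of (f, ls, s) \<Rightarrow>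
     (\<forall>t. subexpr s t \<and> is_conapp t \<longrightarrow>
        is_data_expr t \<or> (\<exists>l\<in>set ls. subexpr (pat_expr l) t)))"

definition lhs_expr :: "string \<Rightarrow> pat list \<Rightarrow> expr" where
  "lhs_expr f ls = foldl App (Fun f) (map pat_expr ls)"

inductive typed :: "csig \<Rightarrow> (string \<Rightarrow> ty) \<Rightarrow> (string \<Rightarrow> ty) \<Rightarrow> expr \<Rightarrow> ty \<Rightarrow> bool"
  for \<Sigma> :: csig and FT :: "string \<Rightarrow> ty" and \<Gamma> :: "string \<Rightarrow> ty" where
  T_Var: "typed \<Sigma> FT \<Gamma> (Var x) (\<Gamma> x)"
| T_Fun: "typed \<Sigma> FT \<Gamma> (Fun f) (FT f)"
| T_Con: "csig_of \<Sigma> c = Some (tys, s) \<Longrightarrow> list_all2 (typed \<Sigma> FT \<Gamma>) ss tys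
          \<Longrightarrow> typed \<Sigma> FT \<Gamma> (ConApp c ss) (TBase s)"
| T_If: "typed \<Sigma> FT \<Gamma> a (TBase SBool) \<Longrightarrow> typed \<Sigma> FT \<Gamma> b t \<Longrightarrow> typed \<Sigma> FT \<Gamma> c t
          \<Longrightarrow> typed \<Sigma> FT \<Gamma> (If a b c) t"
| T_Choose: "(\<forall>s\<in>set ss. typed \<Sigma> FT \<Gamma> s t) \<Longrightarrow> typed \<Sigma> FT \<Gamma> (Choose ss) t"
| T_Pair: "typed \<Sigma> FT \<Gamma> a t1 \<Longrightarrow> typed \<Sigma> FT \<Gamma> b t2 \<Longrightarrow> typed \<Sigma> FT \<Gamma> (Pair a b) (TProd t1 t2)"
| T_App: "typed \<Sigma> FT \<Gamma> a (TArr t1 t2) \<Longrightarrow> typed \<Sigma> FT \<Gamma> b t1 \<Longrightarrow> typed \<Sigma> FT \<Gamma> (App a b) t2"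

definition clause_typable :: "sort set \<Rightarrow> csig \<Rightarrow> (string \<Rightarrow> ty) \<Rightarrow> nat \<Rightarrow> clause \<Rightarrow> bool" where
  "clause_typable S \<Sigma> FT K cl \<longleftrightarrow> (case cl of (f, ls, s) \<Rightarrow>
     (\<exists>\<Gamma> t. (\<forall>x\<in>set (concat (map pvars ls)). ty_over S (\<Gamma> x) \<and> ord (\<Gamma> x) \<le> K) \<and>
        typed \<Sigma> FT \<Gamma> (lhs_expr f ls) t \<and> typed \<Sigma> FT \<Gamma> s t))"

definition data_order :: "sort set \<Rightarrow> csig \<Rightarrow> (string \<Rightarrow> ty) \<Rightarrow> nat \<Rightarrow> clause list \<Rightarrow> bool" where
  "data_order S \<Sigma> FT K p \<longleftrightarrow> (\<forall>cl\<in>set p. clause_typable S \<Sigma> FT K cl)"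

definition wf_prog :: "sort set \<Rightarrow> csig \<Rightarrow> (string \<Rightarrow> ty) \<Rightarrow> string set \<Rightarrow> clause list \<Rightarrow> bool" where
  "wf_prog S \<Sigma> FT D p \<longleftrightarrow>
     (\<forall>cl\<in>set p. case cl of (f, ls, s) \<Rightarrow>
        f \<in> D \<and> funs s \<subseteq> D \<and>
        distinct (concat (map pvars ls)) \<and>
        fvars s \<subseteq> set (concat (map pvars ls)) \<and>
        (\<exists>K. clause_typable S \<Sigma> FT K cl) \<and>
        cons_free cl) \<and>
     (\<forall>cl1\<in>set p. \<forall>cl2\<in>set p. fst cl1 = fst cl2 \<longrightarrow>
        length (fst (snd cl1)) = length (fst (snd cl2)))"

datatype cval = VCon cname "cval list" | VPair cval cval | VFun string "cval list"

definition arity :: "clause list \<Rightarrow> string \<Rightarrow> nat" where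
  "arity p f = (case find (\<lambda>cl. fst cl = f) p of None \<Rightarrow> 0 | Some cl \<Rightarrow> length (fst (snd cl)))"

fun pinst :: "(string \<Rightarrow> cval) \<Rightarrow> pat \<Rightarrow> cval" where
  "pinst \<gamma> (PVar x) = \<gamma> x"
| "pinst \<gamma> (PCon c ls) = VCon c (map (pinst \<gamma>) ls)"

definition clause_matches :: "clause \<Rightarrow> string \<Rightarrow> cval list \<Rightarrow> bool" where
  "clause_matches cl f vs \<longleftrightarrow> fst cl = f \<and> (\<exists>\<gamma>. map (pinst \<gamma>) (fst (snd cl)) = vs)"

inductive evl :: "clause list \<Rightarrow> (string \<Rightarrow> cval) \<Rightarrow> expr \<Rightarrow> cval \<Rightarrow> bool"
  and callv :: "clause list \<Rightarrow> string \<Rightarrow> cval list \<Rightarrow> cval \<Rightarrow> bool"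
  for p :: "clause list" where
  E_Var: "evl p \<gamma> (Var x) (\<gamma> x)"
| E_Fun: "callv p f [] w \<Longrightarrow> evl p \<gamma> (Fun f) w"
| E_Con: "list_all2 (evl p \<gamma>) ss bs \<Longrightarrow> evl p \<gamma> (ConApp c ss) (VCon c bs)"
| E_Pair: "evl p \<gamma> a v \<Longrightarrow> evl p \<gamma> b w \<Longrightarrow> evl p \<gamma> (Pair a b) (VPair v w)"
| E_Choose: "s \<in> set ss \<Longrightarrow> evl p \<gamma> s w \<Longrightarrow> evl p \<gamma> (Choose ss) w"
| E_IfT: "evl p \<gamma> a (VCon CTrue []) \<Longrightarrow> evl p \<gamma> b w \<Longrightarrow> evl p \<gamma> (If a b c) w"
| E_IfF: "evl p \<gamma> a (VCon CFalse []) \<Longrightarrow> evl p \<gamma> c w \<Longrightarrow> evl p \<gamma> (If a b c) w"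
| E_App: "evl p \<gamma> a (VFun f vs) \<Longrightarrow> evl p \<gamma> b v \<Longrightarrow> callv p f (vs @ [v]) w
          \<Longrightarrow> evl p \<gamma> (App a b) w"
| C_Partial: "length vs < arity p f \<Longrightarrow> callv p f vs (VFun f vs)"
| C_Clause: "i < length p \<Longrightarrow> p ! i = (f, ls, s) \<Longrightarrow>
             (\<forall>j<i. \<not> clause_matches (p ! j) f vs) \<Longrightarrow>
             map (pinst \<gamma>) ls = vs \<Longrightarrow> evl p \<gamma> s w \<Longrightarrow> callv p f vs w"

inductive vtyped :: "csig \<Rightarrow> (string \<Rightarrow> ty) \<Rightarrow> clause list \<Rightarrow> cval \<Rightarrow> ty \<Rightarrow> bool"
  for \<Sigma> :: csig and FT :: "string \<Rightarrow> ty" and p :: "clause list" where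
  V_Con: "csig_of \<Sigma> c = Some (tys, s) \<Longrightarrow> list_all2 (vtyped \<Sigma> FT p) vs tys
          \<Longrightarrow> vtyped \<Sigma> FT p (VCon c vs) (TBase s)"
| V_Pair: "vtyped \<Sigma> FT p v t1 \<Longrightarrow> vtyped \<Sigma> FT p w t2 \<Longrightarrow> vtyped \<Sigma> FT p (VPair v w) (TProd t1 t2)"
| V_Fun: "length vs < arity p f \<Longrightarrow> FT f = foldr TArr tys t \<Longrightarrow>
          list_all2 (vtyped \<Sigma> FT p) vs tys \<Longrightarrow> vtyped \<Sigma> FT p (VFun f vs) t"

fun vsyms :: "cval \<Rightarrow> string set" where
  "vsyms (VCon c vs) = \<Union>(vsyms ` set vs)"
| "vsyms (VPair v w) = vsyms v \<union> vsyms w"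
| "vsyms (VFun f vs) = insert f (\<Union>(vsyms ` set vs))"

fun blist :: "bool list \<Rightarrow> cval" where
  "blist [] = VCon CNil []"
| "blist (b # bs) = VCon CCons [VCon (if b then CTrue else CFalse) [], blist bs]"

record cmodule =
  alpha :: ty
  dsyms :: "string set"
  ftype :: "string \<Rightarrow> ty"
  seed :: string
  pred :: string
  zero :: string
  avals :: "nat \<Rightarrow> cval set"
  interp :: "nat \<Rightarrow> cval \<Rightarrow> nat"
  prog :: "clause list"

definition counting_module :: "sort set \<Rightarrow> csig \<Rightarrow> (nat \<Rightarrow> nat) \<Rightarrow> cmodule \<Rightarrow> bool" where
  "counting_module S \<Sigma> P M \<longleftrightarrow>
     (let a = alpha M; D = dsyms M; FT = ftype M; p = prog M; A = avals M; I = interp M in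
      distinct [seed M, pred M, zero M] \<and> {seed M, pred M, zero M} \<subseteq> D \<and>
      ty_over S a \<and> (\<forall>f\<in>D. ty_over S (FT f)) \<and>
      FT (seed M) = TArr (TBase SList) a \<and>
      FT (pred M) = TArr (TBase SList) (TArr a a) \<and>
      FT (zero M) = TArr (TBase SList) (TArr a (TBase SBool)) \<and>
      wf_prog S \<Sigma> FT D p \<and>
      (\<forall>n. \<forall>v\<in>A n. vtyped \<Sigma> FT p v a \<and> vsyms v \<subseteq> D) \<and>
      (\<forall>cs. let n = length cs; c = blist cs in
         (\<exists>!v. callv p (seed M) [c] v) \<and>
         (\<forall>v. callv p (seed M) [c] v \<longrightarrow> v \<in> A n \<and> I n v = P n - 1) \<and>
         (\<forall>v\<in>A n. I n v > 0 \<longrightarrow>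
            (\<exists>!w. callv p (pred M) [c, v] w) \<and>
            (\<forall>w. callv p (pred M) [c, v] w \<longrightarrow> w \<in> A n \<and> I n w = I n v - 1)) \<and>
         (\<forall>v\<in>A n.
            (callv p (zero M) [c, v] (VCon CTrue []) \<longleftrightarrow> I n v = 0) \<and>
            (callv p (zero M) [c, v] (VCon CFalse []) \<longleftrightarrow> I n v > 0))))"

end

theory Submission
  imports Defs
begin

(* Write [j] for the value of an old counter j and let N = P n - 1.  A number k < 2^N is
   represented by a nondeterministic function f :: bool => alpha such that f b returns exactly
   the counters j with 1 <= [j] <= N for which bit [j] - 1 of k is b.  Equality of counters,
   enumeration of all counters below a given one, and bit lookup are programmed by recursion
   along the old predecessor.  The seed 2^N - 1 returns every counter on true and none on false;
   the predecessor is computed bitwise, because bit i of k - 1 differs from bit i of k exactly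
   when all lower bits of k are zero; and k = 0 iff all N bits are zero.  The only variables of
   higher type are such f, of order max 1 (ord alpha), and ord alpha <= K because the old zero
   test binds a variable of type alpha; hence the new program has data order 1.  The new function
   names are longer than all old ones, so the old clauses keep their meaning. *)

subsection \<open>Evaluation\<close>

definition vbool :: "bool \<Rightarrow> cval" where
  "vbool b = VCon (if b then CTrue else CFalse) []"

lemma vbool_eq_iff [simp]:
  "vbool a = vbool b \<longleftrightarrow> a = b"
  "VCon CTrue [] = vbool b \<longleftrightarrow> b" "vbool b = VCon CTrue [] \<longleftrightarrow> b"
  "VCon CFalse [] = vbool b \<longleftrightarrow> \<not> b" "vbool b = VCon CFalse [] \<longleftrightarrow> \<not> b"
  by (auto simp: vbool_def)

definition consistent_arities :: "clause list \<Rightarrow> bool" where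
  "consistent_arities p \<longleftrightarrow> (\<forall>cl1\<in>set p. \<forall>cl2\<in>set p. fst cl1 = fst cl2 \<longrightarrow>
     length (fst (snd cl1)) = length (fst (snd cl2)))"

abbreviation call_expr :: "string \<Rightarrow> expr list \<Rightarrow> expr" where
  "call_expr f es \<equiv> foldl App (Fun f) es"

lemma evl_Var_iff: "evl p \<gamma> (Var x) w \<longleftrightarrow> w = \<gamma> x"
  by (auto intro: evl_callv.intros elim: evl.cases)

lemma evl_Fun_iff: "evl p \<gamma> (Fun f) w \<longleftrightarrow> callv p f [] w"
  by (auto intro: evl_callv.intros elim: evl.cases)

lemma evl_Con_Nil_iff: "evl p \<gamma> (ConApp c []) w \<longleftrightarrow> w = VCon c []"
  by (auto intro: evl_callv.intros elim: evl.cases)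

lemma evl_Choose_iff: "evl p \<gamma> (Choose ss) w \<longleftrightarrow> (\<exists>s\<in>set ss. evl p \<gamma> s w)"
  by (auto intro: evl_callv.intros elim: evl.cases)

lemma evl_If_iff: "evl p \<gamma> (If a b c) w \<longleftrightarrow>
    (evl p \<gamma> a (vbool True) \<and> evl p \<gamma> b w) \<or> (evl p \<gamma> a (vbool False) \<and> evl p \<gamma> c w)"
  by (auto simp: vbool_def intro: evl_callv.intros elim: evl.cases)

lemma evl_App_iff: "evl p \<gamma> (App a b) w \<longleftrightarrow>
    (\<exists>f vs v. evl p \<gamma> a (VFun f vs) \<and> evl p \<gamma> b v \<and> callv p f (vs @ [v]) w)"
  by (blast intro: evl_callv.intros elim: evl.cases)

lemma arity_eq_length:
  assumes "consistent_arities p" and "(f, ls, s) \<in> set p"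
  shows "arity p f = length ls"
proof -
  obtain cl where cl: "find (\<lambda>cl. fst cl = f) p = Some cl"
    using assms(2) by (cases "find (\<lambda>cl. fst cl = f) p") (auto simp: find_None_iff)
  then have "cl \<in> set p" "fst cl = f" by (auto simp: find_Some_iff)
  then have "length (fst (snd cl)) = length ls"
    using assms unfolding consistent_arities_def by (metis fst_conv snd_conv)
  then show ?thesis using cl by (simp add: arity_def)
qed

lemma callv_length_le_arity:
  assumes "consistent_arities p" and "callv p f vs w"
  shows "length vs \<le> arity p f"
  using assms(2)
proof (cases rule: callv.cases)
  case (C_Clause i ls s \<gamma>)
  then have "arity p f = length ls" using arity_eq_length[OF assms(1)] by (metis nth_mem)
  then show ?thesis using C_Clause by auto
qed simp

lemma callv_partial_iff:
  assumes "consistent_arities p" and "length vs < arity p f"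
  shows "callv p f vs w \<longleftrightarrow> w = VFun f vs"
proof
  assume "callv p f vs w"
  then show "w = VFun f vs"
  proof (cases rule: callv.cases)
    case (C_Clause i ls s \<gamma>)
    then have "arity p f = length ls" using arity_eq_length[OF assms(1)] by (metis nth_mem)
    then show ?thesis using C_Clause assms(2) by auto
  qed simp
qed (simp add: assms(2) C_Partial)

lemma evl_call_expr_iff:
  assumes "consistent_arities p" and "length es \<le> arity p f"
  shows "evl p \<gamma> (call_expr f es) w \<longleftrightarrow> (\<exists>vs. list_all2 (evl p \<gamma>) es vs \<and> callv p f vs w)"
  using assms(2)
proof (induction es arbitrary: w rule: rev_induct)
  case Nil
  then show ?case by (simp add: evl_Fun_iff)
next
  case (snoc e es)
  have partial: "evl p \<gamma> (call_expr f es) x \<longleftrightarrow> (\<exists>vs. list_all2 (evl p \<gamma>) es vs \<and> x = VFun f vs)"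
    for x
  proof -
    have "list_all2 (evl p \<gamma>) es vs \<Longrightarrow> callv p f vs x \<longleftrightarrow> x = VFun f vs" for vs
      using snoc.prems callv_partial_iff[OF assms(1)] by (simp add: list_all2_lengthD)
    then show ?thesis using snoc by auto
  qed
  show ?case
  proof
    assume "evl p \<gamma> (call_expr f (es @ [e])) w"
    then obtain us v where "list_all2 (evl p \<gamma>) es us" "evl p \<gamma> e v" "callv p f (us @ [v]) w"
      by (auto simp: evl_App_iff partial)
    then show "\<exists>vs. list_all2 (evl p \<gamma>) (es @ [e]) vs \<and> callv p f vs w"
      by (auto intro!: exI[of _ "us @ [v]"] list_all2_appendI)
  qed (auto simp: evl_App_iff partial list_all2_append1 list_all2_Cons1)
qed

lemma arity_unique_clause:
  assumes "(f, ls, s) \<in> set p" and "\<forall>cl\<in>set p. fst cl = f \<longrightarrow> cl = (f, ls, s)"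
  shows "arity p f = length ls"
proof -
  obtain cl where cl: "find (\<lambda>cl. fst cl = f) p = Some cl"
    using assms(1) by (cases "find (\<lambda>cl. fst cl = f) p") (auto simp: find_None_iff)
  then have "cl = (f, ls, s)" using assms(2) by (auto simp: find_Some_iff)
  then show ?thesis using cl by (simp add: arity_def)
qed

lemma callv_unique_clause_iff:
  assumes cl: "(f, ls, s) \<in> set p" and unique: "\<forall>cl\<in>set p. fst cl = f \<longrightarrow> cl = (f, ls, s)"
  shows "callv p f vs w \<longleftrightarrow>
    (length vs < length ls \<and> w = VFun f vs) \<or> (\<exists>\<gamma>. map (pinst \<gamma>) ls = vs \<and> evl p \<gamma> s w)"
proof
  assume "callv p f vs w"
  then show "(length vs < length ls \<and> w = VFun f vs) \<or> (\<exists>\<gamma>. map (pinst \<gamma>) ls = vs \<and> evl p \<gamma> s w)"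
  proof (cases rule: callv.cases)
    case C_Partial
    then show ?thesis using arity_unique_clause[OF assms] by simp
  next
    case (C_Clause i ls' s' \<gamma>)
    then have "(f, ls', s') = (f, ls, s)" using unique by (metis fst_conv nth_mem)
    then show ?thesis using C_Clause by auto
  qed
next
  assume "(length vs < length ls \<and> w = VFun f vs) \<or> (\<exists>\<gamma>. map (pinst \<gamma>) ls = vs \<and> evl p \<gamma> s w)"
  then consider "length vs < length ls" "w = VFun f vs"
    | \<gamma> where "map (pinst \<gamma>) ls = vs" "evl p \<gamma> s w" by blast
  then show "callv p f vs w"
  proof cases
    case 1
    then show ?thesis using arity_unique_clause[OF assms] by (auto intro: C_Partial)
  next
    case (2 \<gamma>)
    define i where "i = (LEAST i. i < length p \<and> fst (p ! i) = f)"
    have "\<exists>i. i < length p \<and> fst (p ! i) = f" using cl by (metis fst_conv in_set_conv_nth)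
    then have i: "i < length p" "fst (p ! i) = f" unfolding i_def by (metis (mono_tags) LeastI_ex)+
    then have "p ! i = (f, ls, s)" using unique by (metis nth_mem)
    moreover have "\<forall>j<i. \<not> clause_matches (p ! j) f vs"
    proof (intro allI impI)
      fix j assume "j < i"
      then have "\<not> (j < length p \<and> fst (p ! j) = f)" using not_less_Least unfolding i_def by blast
      then show "\<not> clause_matches (p ! j) f vs" using \<open>j < i\<close> i(1) by (simp add: clause_matches_def)
    qed
    ultimately show ?thesis using C_Clause[OF i(1)] 2 by simp
  qed
qed

lemma ex_list_all2_simps:
  "(\<exists>vs. list_all2 R [] vs \<and> Q vs) \<longleftrightarrow> Q []"
  "(\<exists>vs. list_all2 R (e # es) vs \<and> Q vs) \<longleftrightarrow> (\<exists>v. R e v \<and> (\<exists>vs. list_all2 R es vs \<and> Q (v # vs)))"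
  by (auto simp: list_all2_Cons1)

lemma ex_map_eq:
  assumes "distinct xs" and "length xs = length vs"
  shows "\<exists>\<gamma>. map \<gamma> xs = vs"
  using assms
proof (induction xs arbitrary: vs)
  case (Cons x xs)
  then obtain v vs' where vs: "vs = v # vs'" by (cases vs) auto
  then obtain \<gamma> where "map \<gamma> xs = vs'" using Cons by auto
  then have "map (\<gamma>(x := v)) xs = vs'" using Cons.prems by (auto intro!: map_cong)
  then show ?case using vs by (auto intro!: exI[of _ "\<gamma>(x := v)"])
qed simp

subsection \<open>Extending a program by fresh clauses\<close>

lemma arity_append:
  "0 < arity po f \<Longrightarrow> arity (po @ pn) f = arity po f"
  by (induction po) (auto simp: arity_def split: option.splits)

lemma evl_callv_append:
  shows "evl po \<gamma> e w \<Longrightarrow> evl (po @ pn) \<gamma> e w"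
    and "callv po f vs w \<Longrightarrow> callv (po @ pn) f vs w"
proof (induction rule: evl_callv.inducts)
  case (E_Con \<gamma> ss bs c)
  then show ?case by (auto intro!: evl_callv.intros elim: list_all2_mono)
next
  case (C_Partial vs f)
  then show ?case using arity_append[of po f pn] by (auto intro!: evl_callv.intros)
next
  case (C_Clause i f ls s vs \<gamma> w)
  then show ?case by (intro evl_callv.intros(10)[of i _ f ls s]) (auto simp: nth_append)
qed (auto intro: evl_callv.intros)

lemma arity_append_fresh:
  "f \<notin> fst ` set pn \<Longrightarrow> arity (po @ pn) f = arity po f"
proof -
  assume "f \<notin> fst ` set pn"
  then have "find (\<lambda>cl. fst cl = f) pn = None" by (force simp: find_None_iff)
  then show ?thesis by (induction po) (auto simp: arity_def)
qed

definition independent_of :: "clause list \<Rightarrow> string set \<Rightarrow> bool" where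
  "independent_of po B \<longleftrightarrow> (\<forall>cl\<in>set po. fst cl \<notin> B \<and> funs (snd (snd cl)) \<inter> B = {} \<and>
     fvars (snd (snd cl)) \<subseteq> set (concat (map pvars (fst (snd cl)))))"

lemma vsyms_env_subset:
  assumes "map (pinst \<gamma>) ls = vs" and "x \<in> set (concat (map pvars ls))"
  shows "vsyms (\<gamma> x) \<subseteq> \<Union>(vsyms ` set vs)"
proof -
  have "vsyms (\<gamma> x) \<subseteq> vsyms (pinst \<gamma> l)" if "x \<in> set (pvars l)" for l
    using that by (induction l) fastforce+
  then show ?thesis using assms by fastforce
qed

lemma clause_index_append:
  assumes "i < length (po @ pn)" and "(po @ pn) ! i = (f, ls, s)" and "f \<notin> fst ` set pn"
  shows "i < length po" and "po ! i = (f, ls, s)"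
proof -
  show "i < length po"
  proof (rule ccontr)
    assume "\<not> i < length po"
    then have "(po @ pn) ! i \<in> set pn" using assms(1) by (simp add: nth_append)
    then show False using assms(2,3) by force
  qed
  then show "po ! i = (f, ls, s)" using assms(2) by (simp add: nth_append)
qed

text \<open>Values computed by the old clauses never mention the new symbols, so evaluation never
  reaches the appended clauses.\<close>

lemma evl_callv_append_independent:
  assumes indep: "independent_of po (fst ` set pn)"
  defines "B \<equiv> fst ` set pn"
  shows "evl (po @ pn) \<gamma> e w \<Longrightarrow> funs e \<inter> B = {} \<Longrightarrow> (\<forall>x\<in>fvars e. vsyms (\<gamma> x) \<inter> B = {}) \<Longrightarrow>
      evl po \<gamma> e w \<and> vsyms w \<inter> B = {}"
    and "callv (po @ pn) f vs w \<Longrightarrow> f \<notin> B \<Longrightarrow> (\<forall>v\<in>set vs. vsyms v \<inter> B = {}) \<Longrightarrow>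
      callv po f vs w \<and> vsyms w \<inter> B = {}"
proof (induction rule: evl_callv.inducts)
  case (E_Con \<gamma> ss bs c)
  then have "list_all2 (\<lambda>s b. evl po \<gamma> s b \<and> vsyms b \<inter> B = {}) ss bs"
    by (fastforce simp: list_all2_conv_all_nth)
  then show ?case
    by (fastforce simp: list_all2_conv_all_nth in_set_conv_nth intro!: evl_callv.intros)
next
  case (E_App \<gamma> a f vs b v w)
  then show ?case by (fastforce intro: evl_callv.intros)
next
  case (C_Partial vs f)
  then have "length vs < arity po f" by (simp add: B_def arity_append_fresh)
  then show ?case using C_Partial.prems by (auto intro: evl_callv.C_Partial)
next
  case (C_Clause i f ls s vs \<gamma> w)
  have i: "i < length po" "po ! i = (f, ls, s)"
    using clause_index_append[OF \<open>i < length (po @ pn)\<close> \<open>(po @ pn) ! i = (f, ls, s)\<close>]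
      C_Clause.prems(1) unfolding B_def by blast+
  then have "(f, ls, s) \<in> set po" by (metis nth_mem)
  then have "funs s \<inter> B = {}" and fvars: "fvars s \<subseteq> set (concat (map pvars ls))"
    using bspec[OF indep[unfolded independent_of_def] \<open>(f, ls, s) \<in> set po\<close>] unfolding B_def
    by simp_all
  moreover have "\<forall>x\<in>fvars s. vsyms (\<gamma> x) \<inter> B = {}"
    using vsyms_env_subset[OF \<open>map (pinst \<gamma>) ls = vs\<close>] fvars C_Clause.prems(2) by blast
  ultimately have body: "evl po \<gamma> s w \<and> vsyms w \<inter> B = {}" using C_Clause.IH by blast
  have "\<forall>j<i. \<not> clause_matches (po ! j) f vs"
    using \<open>\<forall>j<i. \<not> clause_matches ((po @ pn) ! j) f vs\<close> i(1) by (simp add: nth_append)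
  from evl_callv.C_Clause[OF i this \<open>map (pinst \<gamma>) ls = vs\<close>] body
  show ?case by blast
next
  case (E_Pair \<gamma> a v b w)
  then show ?case by (simp add: Int_Un_distrib2) (blast intro: evl_callv.intros)
next
  case (E_IfT \<gamma> a b w c)
  then show ?case by (simp add: Int_Un_distrib2) (blast intro: evl_callv.intros)
next
  case (E_IfF \<gamma> a c w b)
  then show ?case by (simp add: Int_Un_distrib2) (blast intro: evl_callv.intros)
qed (auto intro: evl_callv.intros)

subsection \<open>Bits of natural numbers\<close>

lemma bit_nat_minus_1:
  fixes k :: nat
  assumes "0 < k"
  shows "bit (k - 1) i \<longleftrightarrow> (bit k i \<longleftrightarrow> (\<exists>j<i. bit k j))"
  using assms
proof (induction i arbitrary: k)
  case 0
  then show ?case by (simp add: bit_0)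
next
  case (Suc i)
  show ?case
  proof (cases "odd k")
    case True
    then have "(k - 1) div 2 = k div 2" by presburger
    then show ?thesis using True by (auto simp: bit_Suc bit_0)
  next
    case False
    then have "(k - 1) div 2 = k div 2 - 1" "0 < k div 2" using Suc.prems by presburger+
    moreover have "(\<exists>j<Suc i. bit k j) \<longleftrightarrow> (\<exists>j<i. bit (k div 2) j)"
      using False by (auto simp: bit_Suc bit_0 less_Suc_eq_0_disj)
    ultimately show ?thesis using Suc.IH by (simp add: bit_Suc)
  qed
qed

lemma nat_eq_if_low_bits_eq:
  fixes k k' :: nat
  assumes "k < 2 ^ N" and "k' < 2 ^ N" and "\<forall>i<N. bit k i = bit k' i"
  shows "k = k'"
proof -
  have "take_bit N k = take_bit N k'"
    by (rule bit_eqI) (use assms(3) in \<open>auto simp: bit_take_bit_iff\<close>)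
  then show ?thesis using assms(1,2) by (simp add: take_bit_nat_eq_self)
qed

lemma low_bits_zero_iff:
  fixes k :: nat
  assumes "k < 2 ^ N"
  shows "(\<forall>i<N. \<not> bit k i) \<longleftrightarrow> k = 0"
  using nat_eq_if_low_bits_eq[OF assms, of 0] by auto

lemma bit_pow2_minus_1_nat: "bit (2 ^ N - 1 :: nat) i \<longleftrightarrow> i < N"
proof -
  have "(2 ^ N - 1 :: nat) = mask N" by (simp add: mask_eq_exp_minus_1)
  then show ?thesis by (simp add: bit_mask_iff)
qed

subsection \<open>The binary counter program\<close>

definition fail_expr :: expr where "fail_expr = Choose []"
definition true_expr :: expr where "true_expr = ConApp CTrue []"
definition false_expr :: expr where "false_expr = ConApp CFalse []"

lemma evl_fail_expr [simp]: "\<not> evl p \<gamma> fail_expr w"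
  by (simp add: fail_expr_def evl_Choose_iff)

lemma evl_true_expr [simp]: "evl p \<gamma> true_expr w \<longleftrightarrow> w = vbool True"
  by (simp add: true_expr_def vbool_def evl_Con_Nil_iff)

lemma evl_false_expr [simp]: "evl p \<gamma> false_expr w \<longleftrightarrow> w = vbool False"
  by (simp add: false_expr_def vbool_def evl_Con_Nil_iff)

definition eq_name :: "string \<Rightarrow> string" where "eq_name pre = pre @ ''EQ''"
definition below_name :: "string \<Rightarrow> string" where "below_name pre = pre @ ''BELOW''"
definition bit_name :: "string \<Rightarrow> string" where "bit_name pre = pre @ ''BIT''"
definition low_zero_name :: "string \<Rightarrow> string" where "low_zero_name pre = pre @ ''LOWZERO''"
definition dec_bit_name :: "string \<Rightarrow> string" where "dec_bit_name pre = pre @ ''DECBIT''"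
definition dec_filter_name :: "string \<Rightarrow> string" where "dec_filter_name pre = pre @ ''DECFILTER''"
definition dec_name :: "string \<Rightarrow> string" where "dec_name pre = pre @ ''DEC''"
definition ones_name :: "string \<Rightarrow> string" where "ones_name pre = pre @ ''ONES''"
definition is_zero_name :: "string \<Rightarrow> string" where "is_zero_name pre = pre @ ''ISZERO''"

lemmas binary_name_defs = eq_name_def below_name_def bit_name_def low_zero_name_def dec_bit_name_def
  dec_filter_name_def dec_name_def ones_name_def is_zero_name_def

text \<open>\<open>sd\<close>, \<open>pd\<close>, \<open>zd\<close> name the old seed, predecessor and zero test.  In the clause bodies,
  \<open>c\<close> is the input list, \<open>i\<close>, \<open>j\<close>, \<open>m\<close> are old counters, \<open>b\<close> is a boolean and
  \<open>f :: bool \<Rightarrow> \<alpha>\<close> encodes a number.\<close>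

definition eq_body :: "string \<Rightarrow> string \<Rightarrow> string \<Rightarrow> expr" where
  "eq_body pre pd zd = If (call_expr zd [Var ''c'', Var ''i''])
      (If (call_expr zd [Var ''c'', Var ''j'']) true_expr false_expr)
      (If (call_expr zd [Var ''c'', Var ''j'']) false_expr
        (call_expr (eq_name pre)
          [Var ''c'', call_expr pd [Var ''c'', Var ''i''], call_expr pd [Var ''c'', Var ''j'']]))"

definition below_body :: "string \<Rightarrow> string \<Rightarrow> string \<Rightarrow> expr" where
  "below_body pre pd zd = If (call_expr zd [Var ''c'', Var ''i'']) fail_expr
      (Choose [Var ''i'', call_expr (below_name pre) [Var ''c'', call_expr pd [Var ''c'', Var ''i'']]])"

definition bit_body :: "string \<Rightarrow> expr" where
  "bit_body pre = Choose
      [If (call_expr (eq_name pre) [Var ''c'', Var ''i'', App (Var ''f'') true_expr]) true_expr fail_expr,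
       If (call_expr (eq_name pre) [Var ''c'', Var ''i'', App (Var ''f'') false_expr]) false_expr fail_expr]"

definition low_zero_body :: "string \<Rightarrow> string \<Rightarrow> string \<Rightarrow> expr" where
  "low_zero_body pre pd zd = If (call_expr zd [Var ''c'', Var ''m'']) true_expr
      (If (call_expr (bit_name pre) [Var ''c'', Var ''f'', Var ''m'']) false_expr
        (call_expr (low_zero_name pre) [Var ''c'', Var ''f'', call_expr pd [Var ''c'', Var ''m'']]))"

definition dec_bit_body :: "string \<Rightarrow> string \<Rightarrow> expr" where
  "dec_bit_body pre pd =
      If (call_expr (low_zero_name pre) [Var ''c'', Var ''f'', call_expr pd [Var ''c'', Var ''j'']])
        (If (call_expr (bit_name pre) [Var ''c'', Var ''f'', Var ''j'']) false_expr true_expr)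
        (call_expr (bit_name pre) [Var ''c'', Var ''f'', Var ''j''])"

definition dec_filter_body :: "string \<Rightarrow> expr" where
  "dec_filter_body pre = If (call_expr (dec_bit_name pre) [Var ''c'', Var ''f'', Var ''j''])
      (If (Var ''b'') (Var ''j'') fail_expr) (If (Var ''b'') fail_expr (Var ''j''))"

definition dec_body :: "string \<Rightarrow> string \<Rightarrow> expr" where
  "dec_body pre sd = call_expr (dec_filter_name pre)
      [Var ''c'', Var ''f'', Var ''b'', call_expr (below_name pre) [Var ''c'', call_expr sd [Var ''c'']]]"

definition ones_body :: "string \<Rightarrow> string \<Rightarrow> expr" where
  "ones_body pre sd =
      If (Var ''b'') (call_expr (below_name pre) [Var ''c'', call_expr sd [Var ''c'']]) fail_expr"

definition is_zero_body :: "string \<Rightarrow> string \<Rightarrow> expr" where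
  "is_zero_body pre sd = call_expr (low_zero_name pre) [Var ''c'', Var ''f'', call_expr sd [Var ''c'']]"

lemmas binary_body_defs = eq_body_def below_body_def bit_body_def low_zero_body_def dec_bit_body_def
  dec_filter_body_def dec_body_def ones_body_def is_zero_body_def

definition binary_clauses :: "string \<Rightarrow> string \<Rightarrow> string \<Rightarrow> string \<Rightarrow> clause list" where
  "binary_clauses pre sd pd zd = [
     (eq_name pre, map PVar [''c'', ''i'', ''j''], eq_body pre pd zd),
     (below_name pre, map PVar [''c'', ''i''], below_body pre pd zd),
     (bit_name pre, map PVar [''c'', ''f'', ''i''], bit_body pre),
     (low_zero_name pre, map PVar [''c'', ''f'', ''m''], low_zero_body pre pd zd),
     (dec_bit_name pre, map PVar [''c'', ''f'', ''j''], dec_bit_body pre pd),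
     (dec_filter_name pre, map PVar [''c'', ''f'', ''b'', ''j''], dec_filter_body pre),
     (dec_name pre, map PVar [''c'', ''f'', ''b''], dec_body pre sd),
     (ones_name pre, map PVar [''c'', ''b''], ones_body pre sd),
     (is_zero_name pre, map PVar [''c'', ''f''], is_zero_body pre sd)]"

subsection \<open>Numbers encoded by functions into counters\<close>

definition yields :: "clause list \<Rightarrow> cval \<Rightarrow> bool \<Rightarrow> cval \<Rightarrow> bool" where
  "yields p v b j \<longleftrightarrow> (\<exists>g us. v = VFun g us \<and> callv p g (us @ [vbool b]) j)"

lemma evl_App_Var_iff:
  "evl p \<gamma> (App (Var x) true_expr) j \<longleftrightarrow> yields p (\<gamma> x) True j"
  "evl p \<gamma> (App (Var x) false_expr) j \<longleftrightarrow> yields p (\<gamma> x) False j"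
  by (auto simp: evl_App_iff evl_Var_iff yields_def) (metis)+

text \<open>Counter values \<open>1, \<dots>, N\<close> stand for the bit positions \<open>0, \<dots>, N - 1\<close>.\<close>

definition encodes :: "clause list \<Rightarrow> cval set \<Rightarrow> (cval \<Rightarrow> nat) \<Rightarrow> nat \<Rightarrow> cval \<Rightarrow> nat \<Rightarrow> bool" where
  "encodes p A I N v k \<longleftrightarrow> (\<forall>b.
     (\<forall>j. yields p v b j \<longrightarrow> j \<in> A \<and> 1 \<le> I j \<and> I j \<le> N \<and> bit k (I j - 1) = b) \<and>
     (\<forall>m. 1 \<le> m \<longrightarrow> m \<le> N \<longrightarrow> bit k (m - 1) = b \<longrightarrow> (\<exists>j. yields p v b j \<and> I j = m)))"

lemma encodes_unique:
  assumes "encodes p A I N v k" and "encodes p A I N v k'" and "k < 2 ^ N" and "k' < 2 ^ N"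
  shows "k = k'"
proof (rule nat_eq_if_low_bits_eq[OF assms(3,4)], intro allI impI)
  fix i assume "i < N"
  then obtain j where "yields p v (bit k i) j" "I j = Suc i"
    using assms(1) unfolding encodes_def by (metis Suc_leI diff_Suc_1 le_add1 plus_1_eq_Suc)
  then show "bit k i = bit k' i" using assms(2) unfolding encodes_def by (metis diff_Suc_1)
qed

locale binary_counter =
  fixes p :: "clause list" and pre sd pd zd :: string
    and A :: "nat \<Rightarrow> cval set" and I :: "nat \<Rightarrow> cval \<Rightarrow> nat" and P :: "nat \<Rightarrow> nat"
  assumes arities_consistent: "consistent_arities p"
    and binary_clauses_unique: "\<forall>cl\<in>set (binary_clauses pre sd pd zd).
      cl \<in> set p \<and> (\<forall>cl'\<in>set p. fst cl' = fst cl \<longrightarrow> cl' = cl)"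
    and seed_total: "\<exists>v. callv p sd [blist cs] v"
    and seed_correct: "callv p sd [blist cs] v \<Longrightarrow>
      v \<in> A (length cs) \<and> I (length cs) v = P (length cs) - 1"
    and pred_total: "v \<in> A (length cs) \<Longrightarrow> I (length cs) v \<noteq> 0 \<Longrightarrow> \<exists>w. callv p pd [blist cs, v] w"
    and pred_correct: "v \<in> A (length cs) \<Longrightarrow> I (length cs) v \<noteq> 0 \<Longrightarrow> callv p pd [blist cs, v] w \<Longrightarrow>
      w \<in> A (length cs) \<and> I (length cs) w = I (length cs) v - 1"
    and zero_correct: "v \<in> A (length cs) \<Longrightarrow>
      (callv p zd [blist cs, v] (VCon CTrue []) \<longleftrightarrow> I (length cs) v = 0) \<and>
      (callv p zd [blist cs, v] (VCon CFalse []) \<longleftrightarrow> 0 < I (length cs) v)"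
begin

lemma callv_binary_iff:
  assumes cl: "(F, map PVar xs, s) \<in> set (binary_clauses pre sd pd zd)"
    and "length vs = length xs" and "distinct xs"
    and body: "\<And>\<gamma>. map \<gamma> xs = vs \<Longrightarrow> evl p \<gamma> s w \<longleftrightarrow> Q"
  shows "callv p F vs w \<longleftrightarrow> Q"
proof -
  have "(F, map PVar xs, s) \<in> set p" "\<forall>cl'\<in>set p. fst cl' = F \<longrightarrow> cl' = (F, map PVar xs, s)"
    using binary_clauses_unique cl by (metis fst_conv)+
  then have "callv p F vs w \<longleftrightarrow> (\<exists>\<gamma>. map \<gamma> xs = vs \<and> evl p \<gamma> s w)"
    using callv_unique_clause_iff \<open>length vs = length xs\<close> by (simp add: o_def)
  then show ?thesis using body ex_map_eq[OF \<open>distinct xs\<close>] \<open>length vs = length xs\<close> by metis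
qed

lemma evl_call_binary_iff:
  assumes "(F, map PVar xs, s) \<in> set (binary_clauses pre sd pd zd)" and "length es = length xs"
  shows "evl p \<gamma> (call_expr F es) w \<longleftrightarrow> (\<exists>vs. list_all2 (evl p \<gamma>) es vs \<and> callv p F vs w)"
proof -
  have "(F, map PVar xs, s) \<in> set p" "\<forall>cl'\<in>set p. fst cl' = F \<longrightarrow> cl' = (F, map PVar xs, s)"
    using binary_clauses_unique assms(1) by (metis fst_conv)+
  then have "arity p F = length xs" using arity_unique_clause by simp
  then show ?thesis using evl_call_expr_iff[OF arities_consistent] assms(2) by simp
qed

context
  fixes cs :: "bool list"
begin

abbreviation "n \<equiv> length cs"
abbreviation "c \<equiv> blist cs"
abbreviation "N \<equiv> P n - 1"
abbreviation "ENC \<equiv> encodes p (A n) (I n) N"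

lemma zero_arity: "2 \<le> arity p zd"
proof -
  obtain s0 where "callv p sd [c] s0" using seed_total by blast
  then have "s0 \<in> A n" using seed_correct by blast
  then have "callv p zd [c, s0] (VCon CTrue []) \<or> callv p zd [c, s0] (VCon CFalse [])"
    using zero_correct by blast
  then show ?thesis using callv_length_le_arity[OF arities_consistent] by fastforce
qed

lemma evl_If_zero_iff:
  assumes "\<gamma> ''c'' = c" and "\<gamma> x = i" and "i \<in> A n"
  shows "evl p \<gamma> (If (call_expr zd [Var ''c'', Var x]) e1 e2) w \<longleftrightarrow>
    (I n i = 0 \<and> evl p \<gamma> e1 w) \<or> (0 < I n i \<and> evl p \<gamma> e2 w)"
proof -
  have "evl p \<gamma> (call_expr zd [Var ''c'', Var x]) u \<longleftrightarrow> callv p zd [c, i] u" for u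
    using evl_call_expr_iff[OF arities_consistent, where f=zd and es="[Var ''c'', Var x]"] zero_arity assms
    by (simp add: evl_Var_iff list_all2_Cons1)
  then show ?thesis using zero_correct assms(3) by (simp add: evl_If_iff vbool_def)
qed

lemma evl_pred_iff:
  assumes "\<gamma> ''c'' = c" and "\<gamma> x = i" and "i \<in> A n" and "I n i \<noteq> 0"
  shows "evl p \<gamma> (call_expr pd [Var ''c'', Var x]) u \<longleftrightarrow> callv p pd [c, i] u"
proof -
  obtain w where "callv p pd [c, i] w" using pred_total assms(3,4) by blast
  then have "2 \<le> arity p pd" using callv_length_le_arity[OF arities_consistent] by fastforce
  then show ?thesis
    using evl_call_expr_iff[OF arities_consistent, where f=pd and es="[Var ''c'', Var x]"] assms
    by (simp add: evl_Var_iff list_all2_Cons1)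
qed

lemma evl_seed_iff:
  assumes "\<gamma> ''c'' = c"
  shows "evl p \<gamma> (call_expr sd [Var ''c'']) u \<longleftrightarrow> callv p sd [c] u"
proof -
  have "1 \<le> arity p sd" using seed_total callv_length_le_arity[OF arities_consistent] by fastforce
  then show ?thesis
    using evl_call_expr_iff[OF arities_consistent, where f=sd and es="[Var ''c'']"] assms
    by (simp add: evl_Var_iff list_all2_Cons1)
qed

lemma binary_clauses_members:
  "(eq_name pre, map PVar [''c'', ''i'', ''j''], eq_body pre pd zd) \<in> set (binary_clauses pre sd pd zd)"
  "(below_name pre, map PVar [''c'', ''i''], below_body pre pd zd) \<in> set (binary_clauses pre sd pd zd)"
  "(bit_name pre, map PVar [''c'', ''f'', ''i''], bit_body pre) \<in> set (binary_clauses pre sd pd zd)"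
  "(low_zero_name pre, map PVar [''c'', ''f'', ''m''], low_zero_body pre pd zd)
     \<in> set (binary_clauses pre sd pd zd)"
  "(dec_bit_name pre, map PVar [''c'', ''f'', ''j''], dec_bit_body pre pd)
     \<in> set (binary_clauses pre sd pd zd)"
  "(dec_filter_name pre, map PVar [''c'', ''f'', ''b'', ''j''], dec_filter_body pre)
     \<in> set (binary_clauses pre sd pd zd)"
  "(dec_name pre, map PVar [''c'', ''f'', ''b''], dec_body pre sd) \<in> set (binary_clauses pre sd pd zd)"
  "(ones_name pre, map PVar [''c'', ''b''], ones_body pre sd) \<in> set (binary_clauses pre sd pd zd)"
  "(is_zero_name pre, map PVar [''c'', ''f''], is_zero_body pre sd) \<in> set (binary_clauses pre sd pd zd)"
  by (simp_all add: binary_clauses_def)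

lemmas clause_eq = binary_clauses_members(1) and clause_below = binary_clauses_members(2)
  and clause_bit = binary_clauses_members(3) and clause_low_zero = binary_clauses_members(4)
  and clause_dec_bit = binary_clauses_members(5) and clause_dec_filter = binary_clauses_members(6)
  and clause_dec = binary_clauses_members(7) and clause_ones = binary_clauses_members(8)
  and clause_is_zero = binary_clauses_members(9)

lemma evl_call_binary_Var_iff:
  assumes "(F, map PVar xs, s) \<in> set (binary_clauses pre sd pd zd)" and "length ys = length xs"
  shows "evl p \<gamma> (call_expr F (map Var ys)) u \<longleftrightarrow> callv p F (map \<gamma> ys) u"
proof -
  have "list_all2 (evl p \<gamma>) (map Var ys) vs \<longleftrightarrow> vs = map \<gamma> ys" for vs
    by (induction ys arbitrary: vs) (auto simp: evl_Var_iff list_all2_Cons1)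
  then show ?thesis using evl_call_binary_iff[OF assms(1)] assms(2) by simp
qed

lemma ex_pred_iff:
  assumes "i \<in> A n" and "I n i \<noteq> 0"
    and "\<And>i'. i' \<in> A n \<Longrightarrow> I n i' = I n i - 1 \<Longrightarrow> Q i' \<longleftrightarrow> R"
  shows "(\<exists>i'. callv p pd [c, i] i' \<and> Q i') \<longleftrightarrow> R"
  using pred_total[OF assms(1,2)] pred_correct[OF assms(1,2)] assms(3) by blast

lemma ex_seed_iff:
  assumes "\<And>s. s \<in> A n \<Longrightarrow> I n s = N \<Longrightarrow> Q s \<longleftrightarrow> R"
  shows "(\<exists>s. callv p sd [c] s \<and> Q s) \<longleftrightarrow> R"
  using seed_total[of cs] seed_correct[of cs] assms by blast

lemma callv_eq_iff:
  assumes "i \<in> A n" and "j \<in> A n"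
  shows "callv p (eq_name pre) [c, i, j] w \<longleftrightarrow> w = vbool (I n i = I n j)"
  using assms
proof (induction "I n i" arbitrary: i j w rule: less_induct)
  case less
  show ?case
  proof (rule callv_binary_iff[OF clause_eq], simp, simp)
    fix \<gamma> assume "map \<gamma> [''c'', ''i'', ''j''] = [c, i, j]"
    then have \<gamma>: "\<gamma> ''c'' = c" "\<gamma> ''i'' = i" "\<gamma> ''j'' = j" by auto
    note zero_tests = evl_If_zero_iff[where \<gamma>=\<gamma>, OF \<gamma>(1,2) less.prems(1)]
      evl_If_zero_iff[where \<gamma>=\<gamma>, OF \<gamma>(1,3) less.prems(2)]
    show "evl p \<gamma> (eq_body pre pd zd) w \<longleftrightarrow> w = vbool (I n i = I n j)"
    proof (cases "I n i = 0 \<or> I n j = 0")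
      case True
      then show ?thesis unfolding eq_body_def using zero_tests by auto
    next
      case False
      then have nz: "I n i \<noteq> 0" "I n j \<noteq> 0" by auto
      have "evl p \<gamma> (call_expr (eq_name pre)
          [Var ''c'', call_expr pd [Var ''c'', Var ''i''], call_expr pd [Var ''c'', Var ''j'']]) w \<longleftrightarrow>
        (\<exists>i'. callv p pd [c, i] i' \<and> (\<exists>j'. callv p pd [c, j] j' \<and> callv p (eq_name pre) [c, i', j'] w))"
        by (simp add: evl_call_binary_iff[OF clause_eq] ex_list_all2_simps evl_Var_iff \<gamma>
            evl_pred_iff[where \<gamma>=\<gamma>, OF \<gamma>(1,2) less.prems(1) nz(1)]
            evl_pred_iff[where \<gamma>=\<gamma>, OF \<gamma>(1,3) less.prems(2) nz(2)] del: foldl_Cons foldl_Nil)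
      also have "\<dots> \<longleftrightarrow> w = vbool (I n i = I n j)"
      proof (rule ex_pred_iff[OF less.prems(1) nz(1)], rule ex_pred_iff[OF less.prems(2) nz(2)])
        fix i' j' assume "i' \<in> A n" "I n i' = I n i - 1" "j' \<in> A n" "I n j' = I n j - 1"
        then show "callv p (eq_name pre) [c, i', j'] w \<longleftrightarrow> w = vbool (I n i = I n j)"
          using less.hyps[of i' j' w] nz by auto
      qed
      finally show ?thesis unfolding eq_body_def using zero_tests nz by simp
    qed
  qed
qed

lemma callv_below_iff:
  assumes "i \<in> A n"
  shows "callv p (below_name pre) [c, i] j \<longleftrightarrow>
    I n i \<noteq> 0 \<and> (j = i \<or> (\<exists>i'. callv p pd [c, i] i' \<and> callv p (below_name pre) [c, i'] j))"
proof (rule callv_binary_iff[OF clause_below], simp, simp)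
  fix \<gamma> assume "map \<gamma> [''c'', ''i''] = [c, i]"
  then have \<gamma>: "\<gamma> ''c'' = c" "\<gamma> ''i'' = i" by auto
  show "evl p \<gamma> (below_body pre pd zd) j \<longleftrightarrow>
    I n i \<noteq> 0 \<and> (j = i \<or> (\<exists>i'. callv p pd [c, i] i' \<and> callv p (below_name pre) [c, i'] j))"
  proof (cases "I n i = 0")
    case False
    then have "evl p \<gamma> (call_expr (below_name pre) [Var ''c'', call_expr pd [Var ''c'', Var ''i'']]) j \<longleftrightarrow>
        (\<exists>i'. callv p pd [c, i] i' \<and> callv p (below_name pre) [c, i'] j)"
      by (simp add: evl_call_binary_iff[OF clause_below] ex_list_all2_simps evl_Var_iff \<gamma>
          evl_pred_iff[where \<gamma>=\<gamma>, OF \<gamma> assms] del: foldl_Cons foldl_Nil)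
    then show ?thesis
      unfolding below_body_def using evl_If_zero_iff[where \<gamma>=\<gamma>, OF \<gamma> assms] False
      by (simp add: evl_Choose_iff evl_Var_iff \<gamma>)
  qed (simp add: below_body_def evl_If_zero_iff[where \<gamma>=\<gamma>, OF \<gamma> assms] del: foldl_Cons foldl_Nil)
qed

lemma callv_below_range:
  assumes "i \<in> A n" and "callv p (below_name pre) [c, i] j"
  shows "j \<in> A n \<and> 1 \<le> I n j \<and> I n j \<le> I n i"
  using assms
proof (induction "I n i" arbitrary: i rule: less_induct)
  case less
  have nz: "I n i \<noteq> 0"
    and step: "j = i \<or> (\<exists>i'. callv p pd [c, i] i' \<and> callv p (below_name pre) [c, i'] j)"
    using callv_below_iff[OF less.prems(1)] less.prems(2) by simp_all
  from step show ?case
  proof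
    assume "\<exists>i'. callv p pd [c, i] i' \<and> callv p (below_name pre) [c, i'] j"
    then obtain i' where "callv p pd [c, i] i'" "callv p (below_name pre) [c, i'] j" by blast
    moreover have "i' \<in> A n" "I n i' = I n i - 1"
      using pred_correct[OF less.prems(1) nz] calculation by auto
    ultimately show ?thesis using less.hyps[of i'] nz by auto
  qed (use nz less.prems in auto)
qed

lemma callv_below_exists:
  assumes "i \<in> A n" and "1 \<le> m" and "m \<le> I n i"
  shows "\<exists>j. callv p (below_name pre) [c, i] j \<and> I n j = m"
  using assms
proof (induction "I n i" arbitrary: i rule: less_induct)
  case less
  have nz: "I n i \<noteq> 0" using less.prems by auto
  show ?case
  proof (cases "m = I n i")
    case True
    then show ?thesis using callv_below_iff[OF less.prems(1)] nz by auto
  next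
    case False
    obtain i' where i': "callv p pd [c, i] i'" using pred_total[OF less.prems(1) nz] by blast
    then have "i' \<in> A n" "I n i' = I n i - 1" using pred_correct[OF less.prems(1) nz] by auto
    moreover have "I n i' < I n i" "m \<le> I n i'" using calculation less.prems False nz by auto
    ultimately obtain j where "callv p (below_name pre) [c, i'] j" "I n j = m"
      using less.hyps[of i'] less.prems(2) by blast
    then show ?thesis using callv_below_iff[OF less.prems(1)] nz i' by blast
  qed
qed

lemma below_seed_range:
  assumes "callv p sd [c] s" and "callv p (below_name pre) [c, s] j"
  shows "j \<in> A n \<and> 1 \<le> I n j \<and> I n j \<le> N"
  using seed_correct[OF assms(1)] callv_below_range[of s j] assms(2) by auto

lemma below_seed_exists:
  assumes "1 \<le> m" and "m \<le> N"
  shows "\<exists>s j. callv p sd [c] s \<and> callv p (below_name pre) [c, s] j \<and> I n j = m"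
proof -
  obtain s where s: "callv p sd [c] s" using seed_total by blast
  then have "s \<in> A n" "I n s = N" using seed_correct by auto
  then obtain j where "callv p (below_name pre) [c, s] j" "I n j = m"
    using callv_below_exists[of s m] assms by auto
  then show ?thesis using s by blast
qed

lemma evl_below_seed_iff:
  assumes "\<gamma> ''c'' = c"
  shows "evl p \<gamma> (call_expr (below_name pre) [Var ''c'', call_expr sd [Var ''c'']]) j \<longleftrightarrow>
    (\<exists>s. callv p sd [c] s \<and> callv p (below_name pre) [c, s] j)"
  by (simp add: evl_call_binary_iff[OF clause_below] ex_list_all2_simps evl_Var_iff assms
      evl_seed_iff[where \<gamma>=\<gamma>, OF assms] del: foldl_Cons foldl_Nil)

lemma callv_bit_iff:
  assumes f: "ENC f k" and i: "i \<in> A n" "1 \<le> I n i" "I n i \<le> N"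
  shows "callv p (bit_name pre) [c, f, i] w \<longleftrightarrow> w = vbool (bit k (I n i - 1))"
proof (rule callv_binary_iff[OF clause_bit], simp, simp)
  fix \<gamma> assume "map \<gamma> [''c'', ''f'', ''i''] = [c, f, i]"
  then have \<gamma>: "\<gamma> ''c'' = c" "\<gamma> ''f'' = f" "\<gamma> ''i'' = i" by auto
  have query: "evl p \<gamma> (call_expr (eq_name pre) [Var ''c'', Var ''i'', App (Var ''f'') e]) (vbool True) \<longleftrightarrow>
      bit k (I n i - 1) = b" if e: "e = (if b then true_expr else false_expr)" for e b
  proof -
    have "evl p \<gamma> (call_expr (eq_name pre) [Var ''c'', Var ''i'', App (Var ''f'') e]) (vbool True) \<longleftrightarrow>
        (\<exists>j. yields p f b j \<and> callv p (eq_name pre) [c, i, j] (vbool True))"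
      using e by (cases b) (simp_all add: evl_call_binary_iff[OF clause_eq] ex_list_all2_simps evl_Var_iff
          \<gamma> evl_App_Var_iff del: foldl_Cons foldl_Nil)
    also have "\<dots> \<longleftrightarrow> (\<exists>j. yields p f b j \<and> I n j = I n i)"
    proof -
      have "callv p (eq_name pre) [c, i, j] (vbool True) \<longleftrightarrow> I n j = I n i" if "yields p f b j" for j
        using that f callv_eq_iff[OF i(1), of j] unfolding encodes_def by auto
      then show ?thesis by blast
    qed
    also have "\<dots> \<longleftrightarrow> bit k (I n i - 1) = b"
    proof
      assume "\<exists>j. yields p f b j \<and> I n j = I n i"
      then show "bit k (I n i - 1) = b" using f unfolding encodes_def by force
    next
      assume "bit k (I n i - 1) = b"
      then show "\<exists>j. yields p f b j \<and> I n j = I n i" using f i unfolding encodes_def by blast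
    qed
    finally show ?thesis .
  qed
  show "evl p \<gamma> (bit_body pre) w \<longleftrightarrow> w = vbool (bit k (I n i - 1))"
    unfolding bit_body_def using query[of true_expr True] query[of false_expr False]
    by (auto simp: evl_Choose_iff evl_If_iff simp del: foldl_Cons foldl_Nil)
qed

lemma callv_low_zero_iff:
  assumes f: "ENC f k" and m: "m \<in> A n" "I n m \<le> N"
  shows "callv p (low_zero_name pre) [c, f, m] w \<longleftrightarrow> w = vbool (\<forall>i<I n m. \<not> bit k i)"
  using m
proof (induction "I n m" arbitrary: m w rule: less_induct)
  case less
  show ?case
  proof (rule callv_binary_iff[OF clause_low_zero], simp, simp)
    fix \<gamma> assume "map \<gamma> [''c'', ''f'', ''m''] = [c, f, m]"
    then have \<gamma>: "\<gamma> ''c'' = c" "\<gamma> ''f'' = f" "\<gamma> ''m'' = m" by auto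
    note zero_test = evl_If_zero_iff[where \<gamma>=\<gamma>, OF \<gamma>(1,3) less.prems(1)]
    show "evl p \<gamma> (low_zero_body pre pd zd) w \<longleftrightarrow> w = vbool (\<forall>i<I n m. \<not> bit k i)"
    proof (cases "I n m = 0")
      case False
      have bit: "evl p \<gamma> (call_expr (bit_name pre) [Var ''c'', Var ''f'', Var ''m'']) u \<longleftrightarrow>
          u = vbool (bit k (I n m - 1))" for u
        using evl_call_binary_Var_iff[OF clause_bit, of "[''c'', ''f'', ''m'']"] callv_bit_iff[OF f]
          less.prems False \<gamma> by simp
      have "evl p \<gamma> (call_expr (low_zero_name pre)
          [Var ''c'', Var ''f'', call_expr pd [Var ''c'', Var ''m'']]) u
          \<longleftrightarrow> (\<exists>m'. callv p pd [c, m] m' \<and> callv p (low_zero_name pre) [c, f, m'] u)" for u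
        by (simp add: evl_call_binary_iff[OF clause_low_zero] ex_list_all2_simps evl_Var_iff \<gamma>
            evl_pred_iff[where \<gamma>=\<gamma>, OF \<gamma>(1,3) less.prems(1) False] del: foldl_Cons foldl_Nil)
      also have "\<dots> u \<longleftrightarrow> u = vbool (\<forall>i<I n m - 1. \<not> bit k i)" for u
        using less.hyps less.prems False by (intro ex_pred_iff) auto
      finally have rec: "evl p \<gamma> (call_expr (low_zero_name pre)
          [Var ''c'', Var ''f'', call_expr pd [Var ''c'', Var ''m'']]) u \<longleftrightarrow>
        u = vbool (\<forall>i<I n m - 1. \<not> bit k i)" for u .
      have "(\<forall>i<I n m. \<not> bit k i) \<longleftrightarrow> \<not> bit k (I n m - 1) \<and> (\<forall>i<I n m - 1. \<not> bit k i)"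
        using False All_less_Suc[of "I n m - 1" "\<lambda>i. \<not> bit k i"] by simp
      then show ?thesis
        unfolding low_zero_body_def zero_test using False
        by (auto simp: evl_If_iff bit rec simp del: foldl_Cons foldl_Nil)
    qed (simp add: low_zero_body_def zero_test del: foldl_Cons foldl_Nil)
  qed
qed

lemma callv_dec_bit_iff:
  assumes f: "ENC f k" and k: "0 < k" and j: "j \<in> A n" "1 \<le> I n j" "I n j \<le> N"
  shows "callv p (dec_bit_name pre) [c, f, j] w \<longleftrightarrow> w = vbool (bit (k - 1) (I n j - 1))"
proof (rule callv_binary_iff[OF clause_dec_bit], simp, simp)
  fix \<gamma> assume "map \<gamma> [''c'', ''f'', ''j''] = [c, f, j]"
  then have \<gamma>: "\<gamma> ''c'' = c" "\<gamma> ''f'' = f" "\<gamma> ''j'' = j" by auto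
  have nz: "I n j \<noteq> 0" using j by auto
  have bit: "evl p \<gamma> (call_expr (bit_name pre) [Var ''c'', Var ''f'', Var ''j'']) u \<longleftrightarrow>
      u = vbool (bit k (I n j - 1))" for u
    using evl_call_binary_Var_iff[OF clause_bit, of "[''c'', ''f'', ''j'']"] callv_bit_iff[OF f j] \<gamma>
    by simp
  have "evl p \<gamma> (call_expr (low_zero_name pre)
      [Var ''c'', Var ''f'', call_expr pd [Var ''c'', Var ''j'']]) u
      \<longleftrightarrow> (\<exists>j'. callv p pd [c, j] j' \<and> callv p (low_zero_name pre) [c, f, j'] u)" for u
    by (simp add: evl_call_binary_iff[OF clause_low_zero] ex_list_all2_simps evl_Var_iff \<gamma>
        evl_pred_iff[where \<gamma>=\<gamma>, OF \<gamma>(1,3) j(1) nz] del: foldl_Cons foldl_Nil)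
  also have "\<dots> u \<longleftrightarrow> u = vbool (\<forall>i<I n j - 1. \<not> bit k i)" for u
    using callv_low_zero_iff[OF f] j nz by (intro ex_pred_iff) auto
  finally have low_zero: "evl p \<gamma> (call_expr (low_zero_name pre)
      [Var ''c'', Var ''f'', call_expr pd [Var ''c'', Var ''j'']]) u \<longleftrightarrow>
    u = vbool (\<forall>i<I n j - 1. \<not> bit k i)" for u .
  show "evl p \<gamma> (dec_bit_body pre pd) w \<longleftrightarrow> w = vbool (bit (k - 1) (I n j - 1))"
    unfolding dec_bit_body_def bit_nat_minus_1[OF k]
    by (auto simp: evl_If_iff bit low_zero simp del: foldl_Cons foldl_Nil)
qed

lemma callv_dec_filter_iff:
  assumes f: "ENC f k" and k: "0 < k" and j: "j \<in> A n" "1 \<le> I n j" "I n j \<le> N"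
  shows "callv p (dec_filter_name pre) [c, f, vbool b, j] w \<longleftrightarrow> bit (k - 1) (I n j - 1) = b \<and> w = j"
proof (rule callv_binary_iff[OF clause_dec_filter], simp, simp)
  fix \<gamma> assume "map \<gamma> [''c'', ''f'', ''b'', ''j''] = [c, f, vbool b, j]"
  then have \<gamma>: "\<gamma> ''c'' = c" "\<gamma> ''f'' = f" "\<gamma> ''b'' = vbool b" "\<gamma> ''j'' = j" by auto
  have "evl p \<gamma> (call_expr (dec_bit_name pre) [Var ''c'', Var ''f'', Var ''j'']) u \<longleftrightarrow>
      u = vbool (bit (k - 1) (I n j - 1))" for u
    using evl_call_binary_Var_iff[OF clause_dec_bit, of "[''c'', ''f'', ''j'']"]
      callv_dec_bit_iff[OF f k j] \<gamma>
    by simp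
  then show "evl p \<gamma> (dec_filter_body pre) w \<longleftrightarrow> bit (k - 1) (I n j - 1) = b \<and> w = j"
    unfolding dec_filter_body_def by (auto simp: evl_If_iff evl_Var_iff \<gamma> simp del: foldl_Cons foldl_Nil)
qed

lemma yields_dec_iff:
  assumes f: "ENC f k" and k: "0 < k"
  shows "yields p (VFun (dec_name pre) [c, f]) b j \<longleftrightarrow>
    (\<exists>s. callv p sd [c] s \<and> callv p (below_name pre) [c, s] j) \<and> bit (k - 1) (I n j - 1) = b"
proof -
  have "yields p (VFun (dec_name pre) [c, f]) b j \<longleftrightarrow> callv p (dec_name pre) [c, f, vbool b] j"
    by (simp add: yields_def)
  also have "\<dots> \<longleftrightarrow>
      (\<exists>s. callv p sd [c] s \<and> callv p (below_name pre) [c, s] j) \<and> bit (k - 1) (I n j - 1) = b"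
  proof (rule callv_binary_iff[OF clause_dec], simp, simp)
    fix \<gamma> assume "map \<gamma> [''c'', ''f'', ''b''] = [c, f, vbool b]"
    then have \<gamma>: "\<gamma> ''c'' = c" "\<gamma> ''f'' = f" "\<gamma> ''b'' = vbool b" by auto
    have "evl p \<gamma> (dec_body pre sd) j \<longleftrightarrow> (\<exists>j'. (\<exists>s. callv p sd [c] s \<and> callv p (below_name pre) [c, s] j')
        \<and> callv p (dec_filter_name pre) [c, f, vbool b, j'] j)"
      unfolding dec_body_def
      by (simp add: evl_call_binary_iff[OF clause_dec_filter] ex_list_all2_simps evl_Var_iff \<gamma>
          evl_below_seed_iff[where \<gamma>=\<gamma>, OF \<gamma>(1)] del: foldl_Cons foldl_Nil)
    also have "\<dots> \<longleftrightarrow>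
        (\<exists>s. callv p sd [c] s \<and> callv p (below_name pre) [c, s] j) \<and> bit (k - 1) (I n j - 1) = b"
    proof -
      have "callv p (dec_filter_name pre) [c, f, vbool b, j'] j \<longleftrightarrow> bit (k - 1) (I n j' - 1) = b \<and> j = j'"
        if "callv p sd [c] s" "callv p (below_name pre) [c, s] j'" for s j'
        using below_seed_range[OF that] callv_dec_filter_iff[OF f k, of j'] by simp
      then show ?thesis by blast
    qed
    finally show "evl p \<gamma> (dec_body pre sd) j \<longleftrightarrow>
        (\<exists>s. callv p sd [c] s \<and> callv p (below_name pre) [c, s] j) \<and> bit (k - 1) (I n j - 1) = b" .
  qed
  finally show ?thesis .
qed

lemma encodes_dec:
  assumes "ENC f k" and "0 < k"
  shows "ENC (VFun (dec_name pre) [c, f]) (k - 1)"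
  unfolding encodes_def yields_dec_iff[OF assms]
proof (intro allI conjI impI)
  fix b m assume "1 \<le> m" "m \<le> N" "bit (k - 1) (m - 1) = b"
  then show "\<exists>j. ((\<exists>s. callv p sd [c] s \<and> callv p (below_name pre) [c, s] j) \<and>
      bit (k - 1) (I n j - 1) = b) \<and> I n j = m"
    using below_seed_exists by blast
next
  fix b j assume "(\<exists>s. callv p sd [c] s \<and> callv p (below_name pre) [c, s] j) \<and> bit (k - 1) (I n j - 1) = b"
  then show "j \<in> A n" "1 \<le> I n j" "I n j \<le> N" "bit (k - 1) (I n j - 1) = b"
    using below_seed_range by blast+
qed

lemma yields_ones_iff:
  "yields p (VFun (ones_name pre) [c]) b j \<longleftrightarrow>
    b \<and> (\<exists>s. callv p sd [c] s \<and> callv p (below_name pre) [c, s] j)"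
proof -
  have "yields p (VFun (ones_name pre) [c]) b j \<longleftrightarrow> callv p (ones_name pre) [c, vbool b] j"
    by (simp add: yields_def)
  also have "\<dots> \<longleftrightarrow> b \<and> (\<exists>s. callv p sd [c] s \<and> callv p (below_name pre) [c, s] j)"
  proof (rule callv_binary_iff[OF clause_ones], simp, simp)
    fix \<gamma> assume "map \<gamma> [''c'', ''b''] = [c, vbool b]"
    then have \<gamma>: "\<gamma> ''c'' = c" "\<gamma> ''b'' = vbool b" by auto
    show "evl p \<gamma> (ones_body pre sd) j \<longleftrightarrow> b \<and> (\<exists>s. callv p sd [c] s \<and> callv p (below_name pre) [c, s] j)"
      unfolding ones_body_def
      by (auto simp: evl_If_iff evl_Var_iff \<gamma> evl_below_seed_iff[where \<gamma>=\<gamma>, OF \<gamma>(1)]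
          simp del: foldl_Cons foldl_Nil)
  qed
  finally show ?thesis .
qed

lemma encodes_ones: "ENC (VFun (ones_name pre) [c]) (2 ^ N - 1)"
  unfolding encodes_def yields_ones_iff bit_pow2_minus_1_nat
proof (intro allI conjI impI)
  fix b m assume "1 \<le> m" "m \<le> N" "(m - 1 < N) = b"
  then have b by linarith
  then show "\<exists>j. (b \<and> (\<exists>s. callv p sd [c] s \<and> callv p (below_name pre) [c, s] j)) \<and> I n j = m"
    using below_seed_exists[OF \<open>1 \<le> m\<close> \<open>m \<le> N\<close>] by blast
next
  fix b j assume "b \<and> (\<exists>s. callv p sd [c] s \<and> callv p (below_name pre) [c, s] j)"
  then show "j \<in> A n" "1 \<le> I n j" "I n j \<le> N" "(I n j - 1 < N) = b"
    using below_seed_range by fastforce+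
qed

lemma callv_is_zero_iff:
  assumes f: "ENC f k" and k: "k < 2 ^ N"
  shows "callv p (is_zero_name pre) [c, f] w \<longleftrightarrow> w = vbool (k = 0)"
proof (rule callv_binary_iff[OF clause_is_zero], simp, simp)
  fix \<gamma> assume "map \<gamma> [''c'', ''f''] = [c, f]"
  then have \<gamma>: "\<gamma> ''c'' = c" "\<gamma> ''f'' = f" by auto
  have "evl p \<gamma> (is_zero_body pre sd) w \<longleftrightarrow> (\<exists>s. callv p sd [c] s \<and> callv p (low_zero_name pre) [c, f, s] w)"
    unfolding is_zero_body_def
    by (simp add: evl_call_binary_iff[OF clause_low_zero] ex_list_all2_simps evl_Var_iff \<gamma>
        evl_seed_iff[where \<gamma>=\<gamma>, OF \<gamma>(1)] del: foldl_Cons foldl_Nil)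
  also have "\<dots> \<longleftrightarrow> w = vbool (\<forall>i<N. \<not> bit k i)"
    using callv_low_zero_iff[OF f] by (intro ex_seed_iff) auto
  finally show "evl p \<gamma> (is_zero_body pre sd) w \<longleftrightarrow> w = vbool (k = 0)"
    using low_bits_zero_iff[OF k] by simp
qed

end

end

subsection \<open>Typing\<close>

fun infer_type :: "csig \<Rightarrow> (string \<Rightarrow> ty) \<Rightarrow> (string \<Rightarrow> ty) \<Rightarrow> expr \<Rightarrow> ty option" where
  "infer_type \<Sigma> FT \<Gamma> (Var x) = Some (\<Gamma> x)"
| "infer_type \<Sigma> FT \<Gamma> (Fun f) = Some (FT f)"
| "infer_type \<Sigma> FT \<Gamma> (ConApp c ss) = (if ss = [] then (case csig_of \<Sigma> c of
      Some (tys, s) \<Rightarrow> if tys = [] then Some (TBase s) else None | None \<Rightarrow> None) else None)"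
| "infer_type \<Sigma> FT \<Gamma> (App a b) = (case infer_type \<Sigma> FT \<Gamma> a of
      Some (TArr t1 t2) \<Rightarrow> (if infer_type \<Sigma> FT \<Gamma> b = Some t1 then Some t2 else None) | _ \<Rightarrow> None)"
| "infer_type \<Sigma> FT \<Gamma> (If a b c) = None"
| "infer_type \<Sigma> FT \<Gamma> (Choose ss) = None"
| "infer_type \<Sigma> FT \<Gamma> (Pair a b) = None"

fun check_type :: "csig \<Rightarrow> (string \<Rightarrow> ty) \<Rightarrow> (string \<Rightarrow> ty) \<Rightarrow> expr \<Rightarrow> ty \<Rightarrow> bool" where
  "check_type \<Sigma> FT \<Gamma> (If a b c) t \<longleftrightarrow>
     check_type \<Sigma> FT \<Gamma> a (TBase SBool) \<and> check_type \<Sigma> FT \<Gamma> b t \<and> check_type \<Sigma> FT \<Gamma> c t"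
| "check_type \<Sigma> FT \<Gamma> (Choose ss) t \<longleftrightarrow> (\<forall>s\<in>set ss. check_type \<Sigma> FT \<Gamma> s t)"
| "check_type \<Sigma> FT \<Gamma> e t \<longleftrightarrow> infer_type \<Sigma> FT \<Gamma> e = Some t"

lemma infer_type_sound: "infer_type \<Sigma> FT \<Gamma> e = Some t \<Longrightarrow> typed \<Sigma> FT \<Gamma> e t"
proof (induction \<Sigma> FT \<Gamma> e arbitrary: t rule: infer_type.induct)
  case (3 \<Sigma> FT \<Gamma> c ss)
  then show ?case by (auto intro!: typed.intros split: if_splits option.splits)
next
  case (4 \<Sigma> FT \<Gamma> a b)
  then show ?case by (auto intro: typed.intros split: if_splits option.splits ty.splits)
qed (auto intro: typed.intros)

lemma check_type_sound: "check_type \<Sigma> FT \<Gamma> e t \<Longrightarrow> typed \<Sigma> FT \<Gamma> e t"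
  by (induction \<Sigma> FT \<Gamma> e t rule: check_type.induct) (auto intro: typed.intros infer_type_sound)

lemma funs_foldl_App: "funs (foldl App e es) = funs e \<union> \<Union>(funs ` set es)"
  by (induction es arbitrary: e) auto

lemma funs_lhs_expr: "funs (lhs_expr f ls) = {f}"
proof -
  have "funs (pat_expr l) = {}" for l by (induction l) auto
  then show ?thesis by (simp add: lhs_expr_def funs_foldl_App)
qed

lemma finite_funs: "finite (funs e)"
  by (induction e) auto

lemma typed_cong_funs:
  "typed \<Sigma> FT \<Gamma> e t \<Longrightarrow> (\<forall>f\<in>funs e. FT' f = FT f) \<Longrightarrow> typed \<Sigma> FT' \<Gamma> e t"
proof (induction rule: typed.induct)
  case (T_Fun f)
  then show ?case using typed.T_Fun[of \<Sigma> FT' \<Gamma> f] by simp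
next
  case (T_Con c tys s ss)
  have "list_all2 (typed \<Sigma> FT' \<Gamma>) ss tys"
    unfolding list_all2_conv_all_nth
  proof (intro conjI allI impI)
    show "length ss = length tys" using T_Con.IH by (simp add: list_all2_conv_all_nth)
    fix i assume i: "i < length ss"
    then have "\<forall>f\<in>funs (ss ! i). FT' f = FT f" using T_Con.prems nth_mem by fastforce
    then show "typed \<Sigma> FT' \<Gamma> (ss ! i) (tys ! i)" using T_Con.IH i by (auto simp: list_all2_conv_all_nth)
  qed
  then show ?case using T_Con by (auto intro: typed.intros)
qed (auto intro: typed.intros)

lemma clause_typable_cong_funs:
  assumes "clause_typable S \<Sigma> FT K (f, ls, s)" and "\<forall>g\<in>insert f (funs s). FT' g = FT g"
  shows "clause_typable S \<Sigma> FT' K (f, ls, s)"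
proof -
  have "\<forall>g\<in>funs (lhs_expr f ls). FT' g = FT g" "\<forall>g\<in>funs s. FT' g = FT g"
    using assms(2) by (simp_all add: funs_lhs_expr)
  then show ?thesis using assms(1) unfolding clause_typable_def by (auto intro: typed_cong_funs)
qed

lemma clause_typable_mono:
  "K \<le> K' \<Longrightarrow> clause_typable S \<Sigma> FT K cl \<Longrightarrow> clause_typable S \<Sigma> FT K' cl"
  unfolding clause_typable_def by (auto split: prod.splits) (meson order_trans)

lemma vsyms_subset_if_vtyped: "vtyped \<Sigma> FT p v t \<Longrightarrow> vsyms v \<subseteq> fst ` set p"
proof (induction rule: vtyped.induct)
  case (V_Fun vs f tys t)
  then obtain cl where "find (\<lambda>cl. fst cl = f) p = Some cl"
    by (auto simp: arity_def split: option.splits)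
  then have "f \<in> fst ` set p" by (auto simp: find_Some_iff)
  moreover have "\<forall>v\<in>set vs. vsyms v \<subseteq> fst ` set p"
    using V_Fun by (fastforce simp: list_all2_conv_all_nth in_set_conv_nth)
  ultimately show ?case by auto
qed (fastforce simp: list_all2_conv_all_nth in_set_conv_nth)+

lemma vtyped_blist: "vtyped \<Sigma> FT p (blist cs) (TBase SList)"
proof (induction cs)
  case (Cons b cs)
  have "vtyped \<Sigma> FT p (VCon (if b then CTrue else CFalse) []) (TBase SBool)"
    by (cases b) (auto intro: vtyped.intros)
  with Cons show ?case by (auto intro: vtyped.V_Con[where tys = "[TBase SBool, TBase SList]"])
qed (auto intro: vtyped.intros)

lemma vsyms_blist [simp]: "vsyms (blist cs) = {}"
  by (induction cs) auto

inductive_cases typed_AppE: "typed \<Sigma> FT \<Gamma> (App a b) t"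
inductive_cases typed_FunE: "typed \<Sigma> FT \<Gamma> (Fun f) t"
inductive_cases typed_VarE: "typed \<Sigma> FT \<Gamma> (Var x) t"
inductive_cases typed_ConAppE: "typed \<Sigma> FT \<Gamma> (ConApp c ss) t"

lemma order_le_if_zero_test_called:
  assumes "callv p zd [v1, v2] (VCon b [])"
    and "\<forall>cl\<in>set p. clause_typable S \<Sigma> FT K cl"
    and "FT zd = TArr (TBase SList) (TArr a (TBase SBool))"
  shows "ord a \<le> K"
  using assms(1)
proof (cases rule: callv.cases)
  case (C_Clause i ls s \<gamma>)
  then obtain l1 l2 where ls: "ls = [l1, l2]" by (auto simp: map_eq_Cons_conv)
  have "(zd, ls, s) \<in> set p" using C_Clause by (metis nth_mem)
  then obtain \<Gamma> t where \<Gamma>: "\<forall>x\<in>set (concat (map pvars ls)). ord (\<Gamma> x) \<le> K"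
    and "typed \<Sigma> FT \<Gamma> (lhs_expr zd ls) t"
    using assms(2) unfolding clause_typable_def by fastforce
  then have "typed \<Sigma> FT \<Gamma> (App (App (Fun zd) (pat_expr l1)) (pat_expr l2)) t"
    using ls by (simp add: lhs_expr_def)
  then have l2: "typed \<Sigma> FT \<Gamma> (pat_expr l2) a"
    using assms(3) by (auto elim!: typed_AppE typed_FunE)
  show ?thesis
  proof (cases l2)
    case (PVar x)
    then show ?thesis using l2 \<Gamma> ls by (auto elim: typed_VarE)
  next
    case (PCon c' ls')
    then show ?thesis using l2 by (auto elim: typed_ConAppE)
  qed
qed

subsection \<open>Well-formedness and typing of the binary counter program\<close>

abbreviation tL :: ty where "tL \<equiv> TBase SList"
abbreviation tB :: ty where "tB \<equiv> TBase SBool"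

definition binary_names :: "string \<Rightarrow> string set" where
  "binary_names pre = {eq_name pre, below_name pre, bit_name pre, low_zero_name pre, dec_bit_name pre,
     dec_filter_name pre, dec_name pre, ones_name pre, is_zero_name pre}"

definition binary_ftype :: "string \<Rightarrow> ty \<Rightarrow> (string \<Rightarrow> ty) \<Rightarrow> string \<Rightarrow> ty" where
  "binary_ftype pre a FT = FT(
     eq_name pre := TArr tL (TArr a (TArr a tB)),
     below_name pre := TArr tL (TArr a a),
     bit_name pre := TArr tL (TArr (TArr tB a) (TArr a tB)),
     low_zero_name pre := TArr tL (TArr (TArr tB a) (TArr a tB)),
     dec_bit_name pre := TArr tL (TArr (TArr tB a) (TArr a tB)),
     dec_filter_name pre := TArr tL (TArr (TArr tB a) (TArr tB (TArr a a))),
     dec_name pre := TArr tL (TArr (TArr tB a) (TArr tB a)),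
     ones_name pre := TArr tL (TArr tB a),
     is_zero_name pre := TArr tL (TArr (TArr tB a) tB))"

definition binary_env :: "ty \<Rightarrow> string \<Rightarrow> ty" where
  "binary_env a x =
     (if x = ''c'' then tL else if x = ''f'' then TArr tB a else if x = ''b'' then tB else a)"

lemma fst_binary_clauses: "fst ` set (binary_clauses pre sd pd zd) = binary_names pre"
  by (auto simp: binary_clauses_def binary_names_def)

lemma distinct_fst_binary_clauses: "distinct (map fst (binary_clauses pre sd pd zd))"
  by (simp add: binary_clauses_def binary_name_defs)

lemma binary_ftype_old: "g \<notin> binary_names pre \<Longrightarrow> binary_ftype pre a FT g = FT g"
  by (simp add: binary_ftype_def binary_names_def)

lemma binary_ftype_new:
  "binary_ftype pre a FT (eq_name pre) = TArr tL (TArr a (TArr a tB))"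
  "binary_ftype pre a FT (below_name pre) = TArr tL (TArr a a)"
  "binary_ftype pre a FT (bit_name pre) = TArr tL (TArr (TArr tB a) (TArr a tB))"
  "binary_ftype pre a FT (low_zero_name pre) = TArr tL (TArr (TArr tB a) (TArr a tB))"
  "binary_ftype pre a FT (dec_bit_name pre) = TArr tL (TArr (TArr tB a) (TArr a tB))"
  "binary_ftype pre a FT (dec_filter_name pre) = TArr tL (TArr (TArr tB a) (TArr tB (TArr a a)))"
  "binary_ftype pre a FT (dec_name pre) = TArr tL (TArr (TArr tB a) (TArr tB a))"
  "binary_ftype pre a FT (ones_name pre) = TArr tL (TArr tB a)"
  "binary_ftype pre a FT (is_zero_name pre) = TArr tL (TArr (TArr tB a) tB)"
  by (simp_all add: binary_ftype_def binary_name_defs)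

lemma binary_clauses_typed:
  assumes "sd \<notin> binary_names pre" "pd \<notin> binary_names pre" "zd \<notin> binary_names pre"
    and "FT sd = TArr tL a" "FT pd = TArr tL (TArr a a)" "FT zd = TArr tL (TArr a tB)"
    and "(f, ls, s) \<in> set (binary_clauses pre sd pd zd)"
  shows "\<exists>t. typed \<Sigma> (binary_ftype pre a FT) (binary_env a) (lhs_expr f ls) t
    \<and> typed \<Sigma> (binary_ftype pre a FT) (binary_env a) s t"
proof -
  have "binary_ftype pre a FT sd = TArr tL a" "binary_ftype pre a FT pd = TArr tL (TArr a a)"
    "binary_ftype pre a FT zd = TArr tL (TArr a tB)"
    using assms binary_ftype_old by auto
  then have "\<forall>(f, ls, s)\<in>set (binary_clauses pre sd pd zd). \<exists>t.
      check_type \<Sigma> (binary_ftype pre a FT) (binary_env a) (lhs_expr f ls) t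
      \<and> check_type \<Sigma> (binary_ftype pre a FT) (binary_env a) s t"
    by (simp add: binary_clauses_def lhs_expr_def binary_env_def binary_ftype_new binary_body_defs
        true_expr_def false_expr_def fail_expr_def)
  then show ?thesis using assms(7) check_type_sound by fastforce
qed

lemma binary_clauses_wf:
  assumes "(f, ls, s) \<in> set (binary_clauses pre sd pd zd)"
  shows "distinct (concat (map pvars ls))" and "fvars s \<subseteq> set (concat (map pvars ls))"
    and "funs s \<subseteq> binary_names pre \<union> {sd, pd, zd}" and "cons_free (f, ls, s)"
  using assms by (auto simp: binary_clauses_def binary_names_def binary_body_defs true_expr_def
      false_expr_def fail_expr_def cons_free_def subexpr_def)

subsection \<open>The exponential counting module\<close>

lemma counting_moduleD:
  assumes "counting_module S \<Sigma> P M"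
  shows "distinct [seed M, pred M, zero M]" and "{seed M, pred M, zero M} \<subseteq> dsyms M"
    and "ty_over S (alpha M)" and "\<forall>f\<in>dsyms M. ty_over S (ftype M f)"
    and "ftype M (seed M) = TArr tL (alpha M)"
    and "ftype M (pred M) = TArr tL (TArr (alpha M) (alpha M))"
    and "ftype M (zero M) = TArr tL (TArr (alpha M) tB)"
    and "wf_prog S \<Sigma> (ftype M) (dsyms M) (prog M)"
    and "v \<in> avals M k \<Longrightarrow> vtyped \<Sigma> (ftype M) (prog M) v (alpha M) \<and> vsyms v \<subseteq> dsyms M"
  using assms unfolding counting_module_def Let_def by simp_all

lemma counting_module_lawsD:
  fixes cs :: "bool list"
  assumes "counting_module S \<Sigma> P M"
  defines "n \<equiv> length cs"
  shows "\<exists>v. callv (prog M) (seed M) [blist cs] v"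
    and "callv (prog M) (seed M) [blist cs] v \<Longrightarrow> v \<in> avals M n \<and> interp M n v = P n - 1"
    and "v \<in> avals M n \<Longrightarrow> 0 < interp M n v \<Longrightarrow> \<exists>w. callv (prog M) (pred M) [blist cs, v] w"
    and "v \<in> avals M n \<Longrightarrow> 0 < interp M n v \<Longrightarrow> callv (prog M) (pred M) [blist cs, v] w \<Longrightarrow>
      w \<in> avals M n \<and> interp M n w = interp M n v - 1"
    and "v \<in> avals M n \<Longrightarrow> (callv (prog M) (zero M) [blist cs, v] (VCon CTrue []) \<longleftrightarrow> interp M n v = 0) \<and>
      (callv (prog M) (zero M) [blist cs, v] (VCon CFalse []) \<longleftrightarrow> 0 < interp M n v)"
proof -
  have H: "\<forall>cs. let n = length cs; c = blist cs in
      (\<exists>!v. callv (prog M) (seed M) [c] v) \<and>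
      (\<forall>v. callv (prog M) (seed M) [c] v \<longrightarrow> v \<in> avals M n \<and> interp M n v = P n - 1) \<and>
      (\<forall>v\<in>avals M n. interp M n v > 0 \<longrightarrow> (\<exists>!w. callv (prog M) (pred M) [c, v] w) \<and>
         (\<forall>w. callv (prog M) (pred M) [c, v] w \<longrightarrow> w \<in> avals M n \<and> interp M n w = interp M n v - 1)) \<and>
      (\<forall>v\<in>avals M n.
         (callv (prog M) (zero M) [c, v] (VCon CTrue []) \<longleftrightarrow> interp M n v = 0) \<and>
         (callv (prog M) (zero M) [c, v] (VCon CFalse []) \<longleftrightarrow> interp M n v > 0))"
    using assms(1) unfolding counting_module_def Let_def by (elim conjE) assumption
  note laws = H[rule_format, of cs, unfolded Let_def, folded n_def]
  note seed = laws[THEN conjunct1] and seed_val = laws[THEN conjunct2, THEN conjunct1]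
    and pred = laws[THEN conjunct2, THEN conjunct2, THEN conjunct1]
    and zero = laws[THEN conjunct2, THEN conjunct2, THEN conjunct2]
  show "\<exists>v. callv (prog M) (seed M) [blist cs] v" using seed by (rule ex1_implies_ex)
  show "callv (prog M) (seed M) [blist cs] v \<Longrightarrow> v \<in> avals M n \<and> interp M n v = P n - 1"
    using seed_val by blast
  show "v \<in> avals M n \<Longrightarrow> 0 < interp M n v \<Longrightarrow> \<exists>w. callv (prog M) (pred M) [blist cs, v] w"
    using pred by (blast dest: ex1_implies_ex)
  show "v \<in> avals M n \<Longrightarrow> 0 < interp M n v \<Longrightarrow> callv (prog M) (pred M) [blist cs, v] w \<Longrightarrow>
      w \<in> avals M n \<and> interp M n w = interp M n v - 1"
    using pred by blast
  show "v \<in> avals M n \<Longrightarrow> (callv (prog M) (zero M) [blist cs, v] (VCon CTrue []) \<longleftrightarrow> interp M n v = 0) \<and>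
      (callv (prog M) (zero M) [blist cs, v] (VCon CFalse []) \<longleftrightarrow> 0 < interp M n v)"
    using zero by blast
qed

locale low_order_counting_module =
  fixes S :: "sort set" and \<Sigma> :: csig and P :: "nat \<Rightarrow> nat" and M :: cmodule and K :: nat
  assumes sig: "wf_sig S \<Sigma>"
    and module: "counting_module S \<Sigma> P M"
    and order: "data_order S \<Sigma> (ftype M) K (prog M)"
    and order_le_1: "K \<le> 1"
begin

abbreviation "po \<equiv> prog M"
abbreviation "a \<equiv> alpha M"

definition old_names :: "string set" where
  "old_names = fst ` set po \<union> (\<Union>cl\<in>set po. funs (snd (snd cl))) \<union> {seed M, pred M, zero M}"

definition prefix :: string where
  "prefix = replicate (Suc (Max (length ` old_names))) CHR ''a''"

abbreviation "new \<equiv> binary_clauses prefix (seed M) (pred M) (zero M)"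
abbreviation "B \<equiv> binary_names prefix"

definition ext_prog :: "clause list" where
  "ext_prog = po @ new"

lemma old_clause_wf:
  assumes "(f, ls, s) \<in> set po"
  shows "f \<in> dsyms M \<and> funs s \<subseteq> dsyms M \<and> distinct (concat (map pvars ls)) \<and>
    fvars s \<subseteq> set (concat (map pvars ls)) \<and> (\<exists>K. clause_typable S \<Sigma> (ftype M) K (f, ls, s)) \<and>
    cons_free (f, ls, s)"
  using bspec[OF counting_moduleD(8)[OF module, unfolded wf_prog_def, THEN conjunct1] assms] by simp

lemma binary_names_fresh: "x \<in> B \<Longrightarrow> x \<notin> old_names"
proof
  assume "x \<in> B" and "x \<in> old_names"
  have "finite old_names" using finite_funs by (auto simp: old_names_def)
  then have "length x \<le> Max (length ` old_names)" using \<open>x \<in> old_names\<close> by auto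
  moreover have "length x > Max (length ` old_names)"
    using \<open>x \<in> B\<close> by (auto simp: binary_names_def prefix_def binary_name_defs)
  ultimately show False by simp
qed

lemma fresh_heads: "cl \<in> set po \<Longrightarrow> fst cl \<notin> B"
  using binary_names_fresh[of "fst cl"] by (auto simp: old_names_def)

lemma fresh_calls: "cl \<in> set po \<Longrightarrow> funs (snd (snd cl)) \<inter> B = {}"
  using binary_names_fresh by (auto simp: old_names_def)

lemma fresh_module_symbols: "seed M \<notin> B" "pred M \<notin> B" "zero M \<notin> B"
  using binary_names_fresh by (auto simp: old_names_def)

lemma new_clause_unique:
  assumes "cl \<in> set new"
  shows "cl \<in> set ext_prog" and "\<forall>cl'\<in>set ext_prog. fst cl' = fst cl \<longrightarrow> cl' = cl"
proof -
  show "cl \<in> set ext_prog" using assms by (simp add: ext_prog_def)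
  have "fst cl \<in> B" using assms fst_binary_clauses by blast
  then show "\<forall>cl'\<in>set ext_prog. fst cl' = fst cl \<longrightarrow> cl' = cl"
    using assms fresh_heads distinct_fst_binary_clauses[unfolded distinct_map]
    by (auto simp: ext_prog_def inj_on_def)
qed

lemma ext_consistent_arities: "consistent_arities ext_prog"
  unfolding consistent_arities_def
proof (intro ballI impI)
  fix cl1 cl2 assume cl: "cl1 \<in> set ext_prog" "cl2 \<in> set ext_prog" "fst cl1 = fst cl2"
  show "length (fst (snd cl1)) = length (fst (snd cl2))"
  proof (cases "cl1 \<in> set new \<or> cl2 \<in> set new")
    case True
    then have "cl1 = cl2" using new_clause_unique(2) cl by metis
    then show ?thesis by simp
  next
    case False
    then have "cl1 \<in> set po" "cl2 \<in> set po" using cl by (auto simp: ext_prog_def)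
    then show ?thesis
      using counting_moduleD(8)[OF module] cl(3) unfolding wf_prog_def by blast
  qed
qed

lemma avals_fresh: "v \<in> avals M k \<Longrightarrow> vsyms v \<inter> B = {}"
  using counting_moduleD(9)[OF module] vsyms_subset_if_vtyped fresh_heads by blast

lemma callv_ext_prog_old_iff:
  assumes "f \<notin> B" and "\<forall>v\<in>set vs. vsyms v \<inter> B = {}"
  shows "callv ext_prog f vs w \<longleftrightarrow> callv po f vs w"
proof
  have "\<forall>cl\<in>set po. fvars (snd (snd cl)) \<subseteq> set (concat (map pvars (fst (snd cl))))"
    using old_clause_wf by fastforce
  then have indep: "independent_of po (fst ` set new)"
    using fresh_heads fresh_calls unfolding independent_of_def fst_binary_clauses by blast
  assume "callv ext_prog f vs w"
  then show "callv po f vs w"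
    using evl_callv_append_independent(2)[OF indep] assms
    unfolding ext_prog_def by (simp add: fst_binary_clauses)
qed (simp add: ext_prog_def evl_callv_append(2))

sublocale binary_counter ext_prog prefix "seed M" "pred M" "zero M" "avals M" "interp M" P
proof
  fix cs :: "bool list" and v w
  note old = counting_module_lawsD[OF module, where cs=cs]
  have seed_iff: "callv ext_prog (seed M) [blist cs] u \<longleftrightarrow> callv po (seed M) [blist cs] u" for u
    using callv_ext_prog_old_iff[OF fresh_module_symbols(1)] by simp
  have step_iff: "callv ext_prog g [blist cs, v] u \<longleftrightarrow> callv po g [blist cs, v] u"
    if "g \<notin> B" "v \<in> avals M (length cs)" for g u
    using callv_ext_prog_old_iff[OF that(1)] avals_fresh[OF that(2)] by simp
  note pred_iff = step_iff[OF fresh_module_symbols(2)]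
    and zero_iff = step_iff[OF fresh_module_symbols(3)]
  show "consistent_arities ext_prog" by (rule ext_consistent_arities)
  show "\<forall>cl\<in>set new. cl \<in> set ext_prog \<and> (\<forall>cl'\<in>set ext_prog. fst cl' = fst cl \<longrightarrow> cl' = cl)"
    using new_clause_unique by blast
  show "\<exists>v. callv ext_prog (seed M) [blist cs] v" using old(1) unfolding seed_iff .
  show "callv ext_prog (seed M) [blist cs] v \<Longrightarrow>
      v \<in> avals M (length cs) \<and> interp M (length cs) v = P (length cs) - 1"
    using old(2) unfolding seed_iff .
  assume v: "v \<in> avals M (length cs)"
  show "(callv ext_prog (zero M) [blist cs, v] (VCon CTrue []) \<longleftrightarrow> interp M (length cs) v = 0) \<and>
      (callv ext_prog (zero M) [blist cs, v] (VCon CFalse []) \<longleftrightarrow> 0 < interp M (length cs) v)"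
    using old(5)[OF v] unfolding zero_iff[OF v] .
  assume "interp M (length cs) v \<noteq> 0"
  then have nz: "0 < interp M (length cs) v" by simp
  show "\<exists>w. callv ext_prog (pred M) [blist cs, v] w"
    using old(3)[OF v nz] unfolding pred_iff[OF v] .
  show "callv ext_prog (pred M) [blist cs, v] w \<Longrightarrow>
      w \<in> avals M (length cs) \<and> interp M (length cs) w = interp M (length cs) v - 1"
    using old(4)[OF v nz] unfolding pred_iff[OF v] .
qed

lemma alpha_order_le_1: "ord a \<le> 1"
proof -
  note old = counting_module_lawsD[OF module, where cs="[]"]
  obtain s where "callv po (seed M) [blist []] s" using old(1) by blast
  then have "s \<in> avals M 0" using old(2) by simp
  then have "callv po (zero M) [blist [], s] (VCon CTrue []) \<or>
      callv po (zero M) [blist [], s] (VCon CFalse [])"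
    using old(5) by (cases "interp M 0 s = 0") simp_all
  then obtain b where "callv po (zero M) [blist [], s] (VCon b [])" by blast
  then have "ord a \<le> K"
    using order[unfolded data_order_def] counting_moduleD(7)[OF module]
    by (rule order_le_if_zero_test_called)
  then show ?thesis using order_le_1 by simp
qed

definition ftype' :: "string \<Rightarrow> ty" where
  "ftype' = binary_ftype prefix a (ftype M)"

lemma old_clause_typable:
  assumes "(f, ls, s) \<in> set po" and "clause_typable S \<Sigma> (ftype M) K' (f, ls, s)"
  shows "clause_typable S \<Sigma> ftype' K' (f, ls, s)"
proof (rule clause_typable_cong_funs[OF assms(2)], intro ballI)
  fix g assume "g \<in> insert f (funs s)"
  then have "g \<notin> B" using fresh_heads[OF assms(1)] fresh_calls[OF assms(1)] by auto
  then show "ftype' g = ftype M g" by (simp add: ftype'_def binary_ftype_old)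
qed

lemma new_clause_typable:
  assumes "(f, ls, s) \<in> set new"
  shows "clause_typable S \<Sigma> ftype' 1 (f, ls, s)"
proof -
  have "SBool \<in> S" "SList \<in> S" using sig by (auto simp: wf_sig_def)
  then have env: "\<forall>x. ty_over S (binary_env a x) \<and> ord (binary_env a x) \<le> 1"
    using counting_moduleD(3)[OF module] alpha_order_le_1 by (auto simp: binary_env_def ty_over_def)
  obtain t where "typed \<Sigma> ftype' (binary_env a) (lhs_expr f ls) t" "typed \<Sigma> ftype' (binary_env a) s t"
    using binary_clauses_typed[OF fresh_module_symbols counting_moduleD(5-7)[OF module] assms, of \<Sigma>]
    unfolding ftype'_def by blast
  with env show ?thesis unfolding clause_typable_def prod.case by blast
qed

lemma ext_prog_data_order: "data_order S \<Sigma> ftype' 1 ext_prog"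
  unfolding data_order_def
proof
  fix cl assume "cl \<in> set ext_prog"
  then consider "cl \<in> set po" | "cl \<in> set new" by (auto simp: ext_prog_def)
  then show "clause_typable S \<Sigma> ftype' 1 cl"
  proof cases
    case 1
    then have "clause_typable S \<Sigma> (ftype M) 1 cl"
      using order clause_typable_mono[OF order_le_1] unfolding data_order_def by blast
    then show ?thesis using old_clause_typable 1 by (cases cl) simp
  qed (use new_clause_typable in \<open>cases cl, simp\<close>)
qed

definition dsyms' :: "string set" where
  "dsyms' = dsyms M \<union> B"

lemma ext_prog_clause_wf:
  assumes "(f, ls, s) \<in> set ext_prog"
  shows "f \<in> dsyms' \<and> funs s \<subseteq> dsyms' \<and> distinct (concat (map pvars ls)) \<and>
    fvars s \<subseteq> set (concat (map pvars ls)) \<and> (\<exists>K. clause_typable S \<Sigma> ftype' K (f, ls, s)) \<and>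
    cons_free (f, ls, s)"
proof -
  consider "(f, ls, s) \<in> set po" | "(f, ls, s) \<in> set new" using assms by (auto simp: ext_prog_def)
  then show ?thesis
  proof cases
    case 1
    then show ?thesis using old_clause_wf[OF 1] old_clause_typable[OF 1] by (auto simp: dsyms'_def)
  next
    case 2
    have "f \<in> B" using 2 fst_binary_clauses by force
    moreover have "{seed M, pred M, zero M} \<subseteq> dsyms M" by (rule counting_moduleD(2)[OF module])
    ultimately show ?thesis
      using binary_clauses_wf[OF 2] new_clause_typable[OF 2] by (auto simp: dsyms'_def)
  qed
qed

lemma ext_prog_wf: "wf_prog S \<Sigma> ftype' dsyms' ext_prog"
  using ext_prog_clause_wf ext_consistent_arities
  unfolding wf_prog_def consistent_arities_def by fastforce

definition avals' :: "nat \<Rightarrow> cval set" where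
  "avals' m = {v. vtyped \<Sigma> ftype' ext_prog v (TArr tB a) \<and> vsyms v \<subseteq> dsyms' \<and>
     (\<exists>k < 2 ^ (P m - 1). encodes ext_prog (avals M m) (interp M m) (P m - 1) v k)}"

definition interp' :: "nat \<Rightarrow> cval \<Rightarrow> nat" where
  "interp' m v = (THE k. k < 2 ^ (P m - 1) \<and> encodes ext_prog (avals M m) (interp M m) (P m - 1) v k)"

lemma interp'_eq:
  assumes "encodes ext_prog (avals M m) (interp M m) (P m - 1) v k" and "k < 2 ^ (P m - 1)"
  shows "interp' m v = k"
  unfolding interp'_def
proof (rule the_equality)
  fix k' assume "k' < 2 ^ (P m - 1) \<and> encodes ext_prog (avals M m) (interp M m) (P m - 1) v k'"
  then show "k' = k" using encodes_unique assms by blast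
qed (use assms in simp)

lemma avals'I:
  assumes "vtyped \<Sigma> ftype' ext_prog v (TArr tB a)" and "vsyms v \<subseteq> dsyms'"
    and "encodes ext_prog (avals M m) (interp M m) (P m - 1) v k" and "k < 2 ^ (P m - 1)"
  shows "v \<in> avals' m" and "interp' m v = k"
  using assms interp'_eq[OF assms(3,4)] unfolding avals'_def by auto

lemma avals'E:
  assumes "v \<in> avals' m"
  obtains k where "k < 2 ^ (P m - 1)" and "encodes ext_prog (avals M m) (interp M m) (P m - 1) v k"
    and "interp' m v = k" and "vtyped \<Sigma> ftype' ext_prog v (TArr tB a)" and "vsyms v \<subseteq> dsyms'"
proof -
  obtain k where k: "k < 2 ^ (P m - 1)" "encodes ext_prog (avals M m) (interp M m) (P m - 1) v k"
    "vtyped \<Sigma> ftype' ext_prog v (TArr tB a)" "vsyms v \<subseteq> dsyms'"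
    using assms unfolding avals'_def by auto
  then show thesis using that interp'_eq[OF k(2,1)] by simp
qed

definition binary_module :: cmodule where
  "binary_module = \<lparr>alpha = TArr tB a, dsyms = dsyms', ftype = ftype', seed = ones_name prefix,
     pred = dec_name prefix, zero = is_zero_name prefix, avals = avals', interp = interp',
     prog = ext_prog\<rparr>"

lemma ftype'_binary:
  "ftype' (ones_name prefix) = TArr tL (TArr tB a)"
  "ftype' (dec_name prefix) = TArr tL (TArr (TArr tB a) (TArr tB a))"
  "ftype' (is_zero_name prefix) = TArr tL (TArr (TArr tB a) tB)"
  by (simp_all add: ftype'_def binary_ftype_new)

lemma ftype'_over: "f \<in> dsyms' \<Longrightarrow> ty_over S (ftype' f)"
proof (cases "f \<in> B")
  case True
  have "SBool \<in> S" "SList \<in> S" using sig by (auto simp: wf_sig_def)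
  with True show ?thesis using counting_moduleD(3)[OF module]
    by (auto simp: binary_names_def ftype'_def binary_ftype_new ty_over_def)
next
  case False
  assume "f \<in> dsyms'"
  with False show ?thesis using counting_moduleD(4)[OF module]
    by (simp add: dsyms'_def ftype'_def binary_ftype_old)
qed

lemma arity_new_clause:
  assumes "(f, ls, s) \<in> set new"
  shows "arity ext_prog f = length ls"
proof (rule arity_unique_clause)
  show "(f, ls, s) \<in> set ext_prog" using new_clause_unique(1)[OF assms] .
  show "\<forall>cl\<in>set ext_prog. fst cl = f \<longrightarrow> cl = (f, ls, s)" using new_clause_unique(2)[OF assms] by simp
qed

lemma arity_ext_prog:
  "arity ext_prog (ones_name prefix) = 2" "arity ext_prog (dec_name prefix) = 3"
  using arity_new_clause[of "ones_name prefix" "map PVar [''c'', ''b'']" "ones_body prefix (seed M)"]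
    arity_new_clause[of "dec_name prefix" "map PVar [''c'', ''f'', ''b'']" "dec_body prefix (seed M)"]
  by (simp_all add: binary_clauses_def)

lemma callv_ones_iff:
  "callv ext_prog (ones_name prefix) [blist cs] v \<longleftrightarrow> v = VFun (ones_name prefix) [blist cs]"
  using callv_partial_iff[OF ext_consistent_arities] arity_ext_prog by simp

lemma callv_dec_iff:
  "callv ext_prog (dec_name prefix) [blist cs, u] v \<longleftrightarrow> v = VFun (dec_name prefix) [blist cs, u]"
  using callv_partial_iff[OF ext_consistent_arities] arity_ext_prog by simp

lemma ones_in_avals':
  fixes cs :: "bool list"
  defines "ones \<equiv> VFun (ones_name prefix) [blist cs]"
  shows "ones \<in> avals' (length cs)" and "interp' (length cs) ones = 2 ^ (P (length cs) - 1) - 1"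
proof -
  have "vtyped \<Sigma> ftype' ext_prog ones (TArr tB a)"
    unfolding ones_def
    by (rule vtyped.V_Fun[where tys = "[tL]"]) (simp_all add: arity_ext_prog ftype'_binary vtyped_blist)
  moreover have "vsyms ones \<subseteq> dsyms'" by (simp add: ones_def dsyms'_def binary_names_def)
  ultimately show "ones \<in> avals' (length cs)" "interp' (length cs) ones = 2 ^ (P (length cs) - 1) - 1"
    using avals'I encodes_ones[of cs] unfolding ones_def by simp_all
qed

lemma dec_in_avals':
  fixes cs :: "bool list"
  assumes "v \<in> avals' (length cs)" and "0 < interp' (length cs) v"
  defines "dec \<equiv> VFun (dec_name prefix) [blist cs, v]"
  shows "dec \<in> avals' (length cs)" and "interp' (length cs) dec = interp' (length cs) v - 1"
proof -
  obtain k where k: "k < 2 ^ (P (length cs) - 1)"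
    "encodes ext_prog (avals M (length cs)) (interp M (length cs)) (P (length cs) - 1) v k"
    "interp' (length cs) v = k" "vtyped \<Sigma> ftype' ext_prog v (TArr tB a)" "vsyms v \<subseteq> dsyms'"
    using avals'E[OF assms(1)] by blast
  have "vtyped \<Sigma> ftype' ext_prog dec (TArr tB a)"
    unfolding dec_def
    by (rule vtyped.V_Fun[where tys = "[tL, TArr tB a]"])
      (simp_all add: arity_ext_prog ftype'_binary vtyped_blist k(4))
  moreover have "vsyms dec \<subseteq> dsyms'" using k(5) by (simp add: dec_def dsyms'_def binary_names_def)
  moreover have "0 < k" using assms(2) k(3) by simp
  ultimately show "dec \<in> avals' (length cs)" "interp' (length cs) dec = interp' (length cs) v - 1"
    using avals'I encodes_dec[OF k(2)] k(1,3) unfolding dec_def by simp_all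
qed

lemma callv_is_zero_interp'_iff:
  assumes "v \<in> avals' (length cs)"
  shows "callv ext_prog (is_zero_name prefix) [blist cs, v] w \<longleftrightarrow> w = vbool (interp' (length cs) v = 0)"
proof -
  obtain k where "k < 2 ^ (P (length cs) - 1)"
    "encodes ext_prog (avals M (length cs)) (interp M (length cs)) (P (length cs) - 1) v k"
    "interp' (length cs) v = k"
    using avals'E[OF assms] by blast
  then show ?thesis using callv_is_zero_iff by simp
qed

lemma binary_module_laws:
  fixes cs :: "bool list"
  defines "m \<equiv> length cs"
  shows "\<exists>!v. callv ext_prog (ones_name prefix) [blist cs] v"
    and "\<forall>v. callv ext_prog (ones_name prefix) [blist cs] v \<longrightarrow>
      v \<in> avals' m \<and> interp' m v = 2 ^ (P m - 1) - 1"
    and "\<forall>v\<in>avals' m. 0 < interp' m v \<longrightarrow> (\<exists>!w. callv ext_prog (dec_name prefix) [blist cs, v] w) \<and>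
      (\<forall>w. callv ext_prog (dec_name prefix) [blist cs, v] w \<longrightarrow>
        w \<in> avals' m \<and> interp' m w = interp' m v - 1)"
    and "\<forall>v\<in>avals' m.
      (callv ext_prog (is_zero_name prefix) [blist cs, v] (VCon CTrue []) \<longleftrightarrow> interp' m v = 0) \<and>
      (callv ext_prog (is_zero_name prefix) [blist cs, v] (VCon CFalse []) \<longleftrightarrow> 0 < interp' m v)"
  unfolding m_def
  using ones_in_avals' dec_in_avals' callv_is_zero_interp'_iff
  by (simp_all add: callv_ones_iff callv_dec_iff vbool_def)

lemma binary_module_counting: "counting_module S \<Sigma> (\<lambda>n. 2 ^ (P n - 1)) binary_module"
  unfolding counting_module_def binary_module_def cmodule.select_convs Let_def
proof (intro conjI)
  show "distinct [ones_name prefix, dec_name prefix, is_zero_name prefix]"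
    by (simp add: binary_name_defs)
  show "{ones_name prefix, dec_name prefix, is_zero_name prefix} \<subseteq> dsyms'"
    by (simp add: dsyms'_def binary_names_def)
  have "SBool \<in> S" using sig by (simp add: wf_sig_def)
  then show "ty_over S (TArr tB a)" using counting_moduleD(3)[OF module] by (simp add: ty_over_def)
  show "\<forall>f\<in>dsyms'. ty_over S (ftype' f)" using ftype'_over by blast
  show "\<forall>m. \<forall>v\<in>avals' m. vtyped \<Sigma> ftype' ext_prog v (TArr tB a) \<and> vsyms v \<subseteq> dsyms'"
  proof (intro allI ballI)
    fix m v assume "v \<in> avals' m"
    then show "vtyped \<Sigma> ftype' ext_prog v (TArr tB a) \<and> vsyms v \<subseteq> dsyms'" by (rule avals'E) simp
  qed
  show "wf_prog S \<Sigma> ftype' dsyms' ext_prog" by (rule ext_prog_wf)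
qed (simp_all only: ftype'_binary, (rule allI, intro conjI; rule binary_module_laws))

end

theorem lemma10:
  fixes S :: "sort set" and \<Sigma> :: csig and P :: "nat \<Rightarrow> nat"
  assumes "wf_sig S \<Sigma>"
    and "\<forall>n. P n > 0"
    and "\<exists>M K. K \<le> 1 \<and> counting_module S \<Sigma> P M \<and> data_order S \<Sigma> (ftype M) K (prog M)"
  shows "\<exists>M. counting_module S \<Sigma> (\<lambda>n. 2 ^ (P n - 1)) M \<and> data_order S \<Sigma> (ftype M) 1 (prog M)"
proof -
  obtain M K where "K \<le> 1" "counting_module S \<Sigma> P M" "data_order S \<Sigma> (ftype M) K (prog M)"
    using assms(3) by blast
  then interpret low_order_counting_module S \<Sigma> P M K
    using assms(1) by unfold_locales
  have "counting_module S \<Sigma> (\<lambda>n. 2 ^ (P n - 1)) binary_module"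
    by (rule binary_module_counting)
  moreover have "data_order S \<Sigma> (ftype binary_module) 1 (prog binary_module)"
    using ext_prog_data_order by (simp add: binary_module_def)
  ultimately show ?thesis by blast
qed

end
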